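(* Let $\varphi:(\tilde R,\tilde{\mathfrak{m}})\to(R,\mathfrak{m})$ be a flat homomorphism of Noetherian local rings of positive characteristic $p$ such that $\varphi(\tilde{\mathfrak{m}})R=\mathfrak{m}$. Then $\operatorname{F-depth}_L(\tilde R)=\operatorname{F-depth}_L(R)$.
   Context: For a Noetherian local ring $(A,\mathfrak{n})$ of characteristic $p>0$ and $s\in\mathbb{N}$, let $F^s:H^i_{\mathfrak n}(A)\to H^i_{\mathfrak n}(A)$ be the map induced on local cohomology by the $s$-th power of the Frobenius $A\to A$, $r\mapsto r^{p^s}$. The F-depth $\operatorname{F-depth}_L(A)$ is the smallest $i$ such that $F^s$ does not send $H^i_{\mathfrak n}(A)$ to zero for any $s$ (i.e. $F^s(H^i_{\mathfrak n}(A))\ne0$ for all $s\in\mathbb{N}$). *)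

theory Defs
  imports Main "HOL-Library.Extended_Nat" "HOL-Computational_Algebra.Primes"
begin

definition is_ideal :: "'a::comm_ring_1 set \<Rightarrow> bool" where
  "is_ideal I \<longleftrightarrow> 0 \<in> I \<and> (\<forall>a\<in>I. \<forall>b\<in>I. a + b \<in> I) \<and> (\<forall>r. \<forall>a\<in>I. r * a \<in> I)"

definition ideal_gen :: "'a::comm_ring_1 set \<Rightarrow> 'a set" where
  "ideal_gen S = {x. \<exists>(n::nat) (r::nat \<Rightarrow> 'a) (s::nat \<Rightarrow> 'a).
      (\<forall>i<n. s i \<in> S) \<and> x = (\<Sum>i<n. r i * s i)}"

definition maximal_ideal :: "'a::comm_ring_1 set \<Rightarrow> bool" where
  "maximal_ideal m \<longleftrightarrow> is_ideal m \<and> 1 \<notin> m \<and>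
     (\<forall>J. is_ideal J \<and> m \<subseteq> J \<and> 1 \<notin> J \<longrightarrow> J = m)"

definition noetherian_ring :: "'a::comm_ring_1 itself \<Rightarrow> bool" where
  "noetherian_ring _ \<longleftrightarrow> (\<forall>I::'a set. is_ideal I \<longrightarrow> (\<exists>xs. ideal_gen (set xs) = I))"

definition local_ring_max :: "'a::comm_ring_1 set \<Rightarrow> bool" where
  "local_ring_max m \<longleftrightarrow> maximal_ideal m \<and> (\<forall>m'. maximal_ideal m' \<longrightarrow> m' = m)"

definition ring_homomorphism :: "('a::comm_ring_1 \<Rightarrow> 'b::comm_ring_1) \<Rightarrow> bool" where
  "ring_homomorphism f \<longleftrightarrow> f 1 = 1 \<and> (\<forall>a b. f (a + b) = f a + f b) \<and> (\<forall>a b. f (a * b) = f a * f b)"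

text \<open>Flatness of the algebra f : A -> B, via the equational criterion of flatness.\<close>
definition flat_hom :: "('a::comm_ring_1 \<Rightarrow> 'b::comm_ring_1) \<Rightarrow> bool" where
  "flat_hom f \<longleftrightarrow> (\<forall>(n::nat) (a::nat \<Rightarrow> 'a) (b::nat \<Rightarrow> 'b).
      (\<Sum>i<n. f (a i) * b i) = 0 \<longrightarrow>
      (\<exists>(k::nat) (c::nat \<Rightarrow> nat \<Rightarrow> 'a) (y::nat \<Rightarrow> 'b).
          (\<forall>i<n. b i = (\<Sum>j<k. f (c i j) * y j)) \<and>
          (\<forall>j<k. (\<Sum>i<n. a i * c i j) = 0)))"

text \<open>For generators xs = [x_0,..,x_{n-1}] of m, the Cech complex has
  C^k = direct sum over subsets I of {..<n} with card I = k of A_{x_I}, x_I = prod of x_i, i in I.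
  A cochain of degree k is represented by numerators z I and a common exponent t,
  standing for the element z I / x_I^t of A_{x_I}.\<close>

definition xprod :: "'a::comm_ring_1 list \<Rightarrow> nat set \<Rightarrow> 'a" where
  "xprod xs I = (\<Prod>i\<in>I. xs ! i)"

text \<open>a/1 is zero in the localization A_{x_I}.\<close>
definition loc_zero :: "'a::comm_ring_1 list \<Rightarrow> nat set \<Rightarrow> 'a \<Rightarrow> bool" where
  "loc_zero xs I a \<longleftrightarrow> (\<exists>N. xprod xs I ^ N * a = 0)"

definition cech_sign :: "nat set \<Rightarrow> nat \<Rightarrow> 'a::comm_ring_1" where
  "cech_sign J j = (-1) ^ card {j'\<in>J. j' < j}"

text \<open>Numerator (over x_J^t) of the J-component of the Cech differential of (z,t).\<close>
definition cech_d :: "'a::comm_ring_1 list \<Rightarrow> (nat set \<Rightarrow> 'a) \<Rightarrow> nat \<Rightarrow> nat set \<Rightarrow> 'a" where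
  "cech_d xs z t J = (\<Sum>j\<in>J. cech_sign J j * z (J - {j}) * (xs ! j) ^ t)"

definition cech_cocycle :: "'a::comm_ring_1 list \<Rightarrow> nat \<Rightarrow> (nat set \<Rightarrow> 'a) \<Rightarrow> nat \<Rightarrow> bool" where
  "cech_cocycle xs k z t \<longleftrightarrow>
     (\<forall>J. J \<subseteq> {..<length xs} \<and> card J = Suc k \<longrightarrow> loc_zero xs J (cech_d xs z t J))"

definition cech_coboundary :: "'a::comm_ring_1 list \<Rightarrow> nat \<Rightarrow> (nat set \<Rightarrow> 'a) \<Rightarrow> nat \<Rightarrow> bool" where
  "cech_coboundary xs k z t \<longleftrightarrow>
     (if k = 0 then (\<forall>I. I \<subseteq> {..<length xs} \<and> card I = 0 \<longrightarrow> loc_zero xs I (z I))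
      else (\<exists>(y::nat set \<Rightarrow> 'a) u. \<forall>I. I \<subseteq> {..<length xs} \<and> card I = k \<longrightarrow>
              loc_zero xs I (z I * xprod xs I ^ u - cech_d xs y u I * xprod xs I ^ t)))"

text \<open>F^s does not send H^i_m(A) to zero: some class whose image under the map induced by
  r \<mapsto> r^(p^s) (on the Cech complex: a/x^t \<mapsto> a^(p^s)/x^(t p^s)) is nonzero.\<close>
definition frob_nonzero_on :: "'a::comm_ring_1 list \<Rightarrow> nat \<Rightarrow> nat \<Rightarrow> bool" where
  "frob_nonzero_on xs i s \<longleftrightarrow>
     (\<exists>z t. cech_cocycle xs i z t \<and>
        \<not> cech_coboundary xs i (\<lambda>I. z I ^ (CHAR('a) ^ s)) (t * CHAR('a) ^ s))"

definition fdepth_prop :: "'a::comm_ring_1 list \<Rightarrow> nat \<Rightarrow> bool" where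
  "fdepth_prop xs i \<longleftrightarrow> (\<forall>s. frob_nonzero_on xs i s)"

text \<open>F-depth_L of the local ring with maximal ideal m, computed via the Cech complex on
  a (chosen) finite list of generators of m; infinity if no such i exists.\<close>
definition F_depth_L :: "'a::comm_ring_1 set \<Rightarrow> enat" where
  "F_depth_L m = (let xs = (SOME xs. ideal_gen (set xs) = m) in
     if \<exists>i. fdepth_prop xs i then enat (LEAST i. fdepth_prop xs i) else \<infinity>)"

end

theory Submission
  imports Defs
begin

text \<open>First, the property "F^s is nonzero on H^i" does not depend on the
  generators: adding a generator e lying in the ideal of the others changes the complex by a
  cone over the complex localised at x_e, and that complex is acyclic because x_e is in the
  ideal it inverts (an explicit contracting homotopy). Second, images under the flat map of
  generators of mt generate m, and the Cech complex over R is the base change of the one over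
  the smaller ring: a class is killed by F^s over R iff it is over the smaller ring, because a
  linear system with coefficients in the smaller ring solvable over R is solvable already
  there (faithful flatness, from mt R = m and locality), and cocycles over R are R-combinations
  of cocycles from below (flatness), on which F^s acts as the Frobenius-twisted combination.\<close>

section \<open>Ring homomorphisms and ideals\<close>

context
  fixes f :: "'a::comm_ring_1 \<Rightarrow> 'b::comm_ring_1"
  assumes hom: "ring_homomorphism f"
begin

lemma hom_add: "f (a + b) = f a + f b"
  and hom_mult: "f (a * b) = f a * f b"
  and hom_1: "f 1 = 1"
  using hom unfolding ring_homomorphism_def by blast+

lemma hom_0: "f 0 = 0"
  using hom_add[of 0 0] by simp

lemma hom_uminus: "f (- a) = - f a"
  using hom_add[of a "- a"] hom_0 by (simp add: eq_neg_iff_add_eq_0 add.commute)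

lemma hom_diff: "f (a - b) = f a - f b"
  using hom_add[of a "- b"] hom_uminus[of b] by simp

lemma hom_sum: "f (\<Sum>i\<in>A. g i) = (\<Sum>i\<in>A. f (g i))"
  by (induction A rule: infinite_finite_induct) (simp_all add: hom_0 hom_add)

lemma hom_prod: "f (\<Prod>i\<in>A. g i) = (\<Prod>i\<in>A. f (g i))"
  by (induction A rule: infinite_finite_induct) (simp_all add: hom_1 hom_mult)

lemma hom_power: "f (a ^ n) = f a ^ n"
  by (induction n) (simp_all add: hom_1 hom_mult)

lemma hom_cech_sign: "f (cech_sign J j) = cech_sign J j"
  unfolding cech_sign_def by (simp add: hom_power hom_uminus hom_1)

end

lemma ideal_0: "is_ideal J \<Longrightarrow> 0 \<in> J"
  and ideal_add: "is_ideal J \<Longrightarrow> a \<in> J \<Longrightarrow> b \<in> J \<Longrightarrow> a + b \<in> J"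
  and ideal_mult: "is_ideal J \<Longrightarrow> a \<in> J \<Longrightarrow> r * a \<in> J"
  unfolding is_ideal_def by blast+

lemma ideal_sum: "is_ideal J \<Longrightarrow> (\<And>i. i \<in> A \<Longrightarrow> f i \<in> J) \<Longrightarrow> (\<Sum>i\<in>A. f i) \<in> J"
  by (induction A rule: infinite_finite_induct) (simp_all add: ideal_0 ideal_add)

lemma in_ideal_gen: "x \<in> S \<Longrightarrow> x \<in> ideal_gen S"
  unfolding ideal_gen_def by (intro CollectI exI[of _ 1] exI[of _ "\<lambda>_. 1"] exI[of _ "\<lambda>_. x"]) simp

lemma ideal_gen_mono: "X \<subseteq> Y \<Longrightarrow> ideal_gen X \<subseteq> ideal_gen Y"
  unfolding ideal_gen_def by blast

lemma ideal_gen_least: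
  assumes J: "is_ideal J" and X: "X \<subseteq> J"
  shows "ideal_gen X \<subseteq> J"
proof
  fix x assume "x \<in> ideal_gen X"
  then obtain n :: nat and r s where "\<forall>i<n. s i \<in> X" and x: "x = (\<Sum>i<n. r i * s i)"
    unfolding ideal_gen_def by blast
  then show "x \<in> J"
    using X by (auto intro!: ideal_sum[OF J] ideal_mult[OF J])
qed

lemma is_ideal_ideal_gen: "is_ideal (ideal_gen X)"
  unfolding is_ideal_def
proof (intro conjI ballI allI)
  show "0 \<in> ideal_gen X"
    unfolding ideal_gen_def by (intro CollectI exI[of _ 0]) simp
next
  fix a b assume "a \<in> ideal_gen X" "b \<in> ideal_gen X"
  then obtain n1 n2 :: nat and r1 s1 r2 s2 where
      s1: "\<forall>i<n1. s1 i \<in> X" and a: "a = (\<Sum>i<n1. r1 i * s1 i)" and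
      s2: "\<forall>i<n2. s2 i \<in> X" and b: "b = (\<Sum>i<n2. r2 i * s2 i)"
    unfolding ideal_gen_def by blast
  define r where "r i = (if i < n1 then r1 i else r2 (i - n1))" for i
  define s where "s i = (if i < n1 then s1 i else s2 (i - n1))" for i
  have "(\<Sum>i<n1 + n2. r i * s i) = (\<Sum>i\<in>{0..<n1}. r i * s i) + (\<Sum>i\<in>{n1..<n1 + n2}. r i * s i)"
    unfolding atLeast0LessThan[symmetric] by (rule sum.atLeastLessThan_concat[symmetric]) auto
  also have "(\<Sum>i\<in>{n1..<n1 + n2}. r i * s i) = (\<Sum>i\<in>{0..<n2}. r (i + n1) * s (i + n1))"
    using sum.shift_bounds_nat_ivl[of "\<lambda>i. r i * s i" 0 n1 n2] by (simp add: add.commute)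
  also have "(\<Sum>i\<in>{0..<n1}. r i * s i) + (\<Sum>i\<in>{0..<n2}. r (i + n1) * s (i + n1)) = a + b"
    unfolding a b r_def s_def atLeast0LessThan by simp
  finally have "a + b = (\<Sum>i<n1 + n2. r i * s i)" ..
  moreover have "\<forall>i<n1 + n2. s i \<in> X"
    unfolding s_def using s1 s2 by auto
  ultimately show "a + b \<in> ideal_gen X"
    unfolding ideal_gen_def by (intro CollectI exI[of _ "n1 + n2"] exI[of _ r] exI[of _ s] conjI)
next
  fix c a assume "a \<in> ideal_gen X"
  then obtain n :: nat and r s where "\<forall>i<n. s i \<in> X" and "a = (\<Sum>i<n. r i * s i)"
    unfolding ideal_gen_def by blast
  then have "(\<forall>i<n. s i \<in> X) \<and> c * a = (\<Sum>i<n. (c * r i) * s i)"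
    by (simp add: sum_distrib_left algebra_simps)
  then show "c * a \<in> ideal_gen X"
    unfolding ideal_gen_def by (intro CollectI exI[of _ n] exI[of _ "\<lambda>i. c * r i"] exI[of _ s])
qed

lemma is_ideal_lin_combs: "is_ideal {x. \<exists>a. x = (\<Sum>j\<in>S. a j * g j)}"
  unfolding is_ideal_def
proof (intro conjI ballI allI)
  show "0 \<in> {x. \<exists>a. x = (\<Sum>j\<in>S. a j * g j)}" by (auto intro: exI[of _ "\<lambda>_. 0"])
next
  fix x y assume "x \<in> {x. \<exists>a. x = (\<Sum>j\<in>S. a j * g j)}" "y \<in> {x. \<exists>a. x = (\<Sum>j\<in>S. a j * g j)}"
  then obtain a b where "x = (\<Sum>j\<in>S. a j * g j)" "y = (\<Sum>j\<in>S. b j * g j)" by blast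
  then have "x + y = (\<Sum>j\<in>S. (a j + b j) * g j)"
    by (simp add: sum.distrib distrib_right)
  then show "x + y \<in> {x. \<exists>a. x = (\<Sum>j\<in>S. a j * g j)}" by (intro CollectI exI[of _ "\<lambda>j. a j + b j"])
next
  fix r x assume "x \<in> {x. \<exists>a. x = (\<Sum>j\<in>S. a j * g j)}"
  then obtain a where "x = (\<Sum>j\<in>S. a j * g j)" by blast
  then have "r * x = (\<Sum>j\<in>S. (r * a j) * g j)"
    by (simp add: sum_distrib_left algebra_simps)
  then show "r * x \<in> {x. \<exists>a. x = (\<Sum>j\<in>S. a j * g j)}" by (intro CollectI exI[of _ "\<lambda>j. r * a j"])
qed

lemma ideal_gen_image_finite:
  fixes g :: "'i \<Rightarrow> 'a::comm_ring_1"
  assumes S: "finite S"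
  shows "x \<in> ideal_gen (g ` S) \<longleftrightarrow> (\<exists>a. x = (\<Sum>j\<in>S. a j * g j))"
proof
  have "g i \<in> {x. \<exists>a. x = (\<Sum>j\<in>S. a j * g j)}" if "i \<in> S" for i
  proof -
    have "(\<Sum>j\<in>S. (if j = i then 1 else 0) * g j) = (\<Sum>j\<in>S. if j = i then g j else 0)"
      by (rule sum.cong) auto
    then have "g i = (\<Sum>j\<in>S. (if j = i then 1 else 0) * g j)" using S that by simp
    then show ?thesis by (intro CollectI exI)
  qed
  then have "g ` S \<subseteq> {x. \<exists>a. x = (\<Sum>j\<in>S. a j * g j)}" by blast
  then show "x \<in> ideal_gen (g ` S) \<Longrightarrow> \<exists>a. x = (\<Sum>j\<in>S. a j * g j)"
    using ideal_gen_least[OF is_ideal_lin_combs] by blast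
next
  assume "\<exists>a. x = (\<Sum>j\<in>S. a j * g j)"
  then obtain a where x: "x = (\<Sum>j\<in>S. a j * g j)" ..
  have "a j * g j \<in> ideal_gen (g ` S)" if "j \<in> S" for j
    using that by (intro ideal_mult[OF is_ideal_ideal_gen] in_ideal_gen) blast
  then show "x \<in> ideal_gen (g ` S)"
    unfolding x by (rule ideal_sum[OF is_ideal_ideal_gen])
qed

lemma ideal_gen_image_hom:
  assumes hom: "ring_homomorphism f"
  shows "ideal_gen (f ` ideal_gen T) = ideal_gen (f ` T)"
proof
  show "ideal_gen (f ` T) \<subseteq> ideal_gen (f ` ideal_gen T)"
    by (intro ideal_gen_mono image_mono subsetI in_ideal_gen)
  show "ideal_gen (f ` ideal_gen T) \<subseteq> ideal_gen (f ` T)"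
  proof (intro ideal_gen_least[OF is_ideal_ideal_gen] image_subsetI)
    fix x assume "x \<in> ideal_gen T"
    then obtain n :: nat and r s where s: "\<forall>i<n. s i \<in> T" and x: "x = (\<Sum>i<n. r i * s i)"
      unfolding ideal_gen_def by blast
    have "f (r i) * f (s i) \<in> ideal_gen (f ` T)" if "i < n" for i
      using s that by (intro ideal_mult[OF is_ideal_ideal_gen] in_ideal_gen) blast
    then show "f x \<in> ideal_gen (f ` T)"
      unfolding x hom_sum[OF hom] hom_mult[OF hom] by (auto intro: ideal_sum[OF is_ideal_ideal_gen])
  qed
qed

lemma power_add_in_ideal:
  fixes u v :: "'a::comm_ring_1"
  assumes J: "is_ideal J" and u: "u ^ E \<in> J" and v: "v ^ M \<in> J"
  shows "(u + v) ^ (E + M) \<in> J"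
proof -
  have "(u + v) ^ (E + M) = (\<Sum>k\<le>E + M. of_nat ((E + M) choose k) * u ^ k * v ^ (E + M - k))"
    by (rule binomial_ring)
  also have "\<dots> \<in> J"
  proof (rule ideal_sum[OF J])
    fix k assume "k \<in> {..E + M}"
    show "of_nat ((E + M) choose k) * u ^ k * v ^ (E + M - k) \<in> J"
    proof (cases "E \<le> k")
      case True
      then obtain d where "k = E + d" using le_Suc_ex by blast
      then have "of_nat ((E + M) choose k) * u ^ k * v ^ (E + M - k) =
          (of_nat ((E + M) choose k) * u ^ d * v ^ (E + M - k)) * u ^ E"
        by (simp add: power_add algebra_simps)
      then show ?thesis by (simp only: ideal_mult[OF J u])
    next
      case False
      then have "E + M - k = M + (E - k)" by auto
      then have "of_nat ((E + M) choose k) * u ^ k * v ^ (E + M - k) =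
          (of_nat ((E + M) choose k) * u ^ k * v ^ (E - k)) * v ^ M"
        by (simp add: power_add algebra_simps)
      then show ?thesis by (simp only: ideal_mult[OF J v])
    qed
  qed
  finally show ?thesis .
qed

lemma power_in_ideal_gen_powers:
  fixes g :: "'i \<Rightarrow> 'a::comm_ring_1"
  assumes "finite S"
  shows "\<exists>M. (\<Sum>j\<in>S. a j * g j) ^ M \<in> ideal_gen ((\<lambda>j. g j ^ E) ` S)"
  using assms
proof (induction S rule: finite_induct)
  case empty
  show ?case by (intro exI[of _ 1]) (simp add: ideal_0[OF is_ideal_ideal_gen])
next
  case (insert e S)
  let ?J = "ideal_gen ((\<lambda>j. g j ^ E) ` insert e S)"
  obtain M where "(\<Sum>j\<in>S. a j * g j) ^ M \<in> ideal_gen ((\<lambda>j. g j ^ E) ` S)"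
    using insert.IH by blast
  moreover have "ideal_gen ((\<lambda>j. g j ^ E) ` S) \<subseteq> ?J"
    by (intro ideal_gen_mono image_mono) blast
  ultimately have v: "(\<Sum>j\<in>S. a j * g j) ^ M \<in> ?J" by blast
  have "(a e * g e) ^ E \<in> ?J"
    unfolding power_mult_distrib by (intro ideal_mult[OF is_ideal_ideal_gen] in_ideal_gen) blast
  then have "(a e * g e + (\<Sum>j\<in>S. a j * g j)) ^ (E + M) \<in> ?J"
    using v by (rule power_add_in_ideal[OF is_ideal_ideal_gen])
  then show ?case using insert.hyps by auto
qed

lemma is_ideal_Union_chain:
  assumes C: "C \<in> chains {J. is_ideal J}" and "C \<noteq> {}"
  shows "is_ideal (\<Union>C)"
  unfolding is_ideal_def
proof (intro conjI ballI allI)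
  have ideals: "is_ideal X" if "X \<in> C" for X
    using C that unfolding chains_def by blast
  show "0 \<in> \<Union>C" using \<open>C \<noteq> {}\<close> ideals ideal_0 by blast
  fix r a assume "a \<in> \<Union>C"
  then show "r * a \<in> \<Union>C" using ideals ideal_mult by blast
next
  fix a b assume "a \<in> \<Union>C" "b \<in> \<Union>C"
  then obtain X Y where XY: "X \<in> C" "a \<in> X" "Y \<in> C" "b \<in> Y" by blast
  have "is_ideal X" "is_ideal Y" using XY C unfolding chains_def by blast+
  have "X \<subseteq> Y \<or> Y \<subseteq> X" using chainsD[OF C] XY by blast
  then show "a + b \<in> \<Union>C"
  proof
    assume "X \<subseteq> Y"
    then show ?thesis using XY ideal_add[OF \<open>is_ideal Y\<close>] by blast
  next
    assume "Y \<subseteq> X"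
    then show ?thesis using XY ideal_add[OF \<open>is_ideal X\<close>] by blast
  qed
qed

lemma proper_ideal_in_maximal:
  fixes I :: "'a::comm_ring_1 set"
  assumes I: "is_ideal I" "1 \<notin> I"
  shows "\<exists>M. maximal_ideal M \<and> I \<subseteq> M"
proof -
  define A where "A = {J. is_ideal J \<and> I \<subseteq> J \<and> (1::'a) \<notin> J}"
  have "\<Union>C \<in> A" if C: "C \<in> chains A" and "C \<noteq> {}" for C
  proof -
    have "C \<in> chains {J. is_ideal J}" using C unfolding chains_def A_def by blast
    then have "is_ideal (\<Union>C)" using \<open>C \<noteq> {}\<close> by (rule is_ideal_Union_chain)
    then show ?thesis using C \<open>C \<noteq> {}\<close> unfolding A_def chains_def by blast
  qed
  moreover have "I \<in> A" using I unfolding A_def by blast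
  ultimately have "\<forall>C\<in>chains A. \<exists>U\<in>A. \<forall>X\<in>C. X \<subseteq> U"
    by (metis Sup_upper empty_iff)
  then obtain M where M: "M \<in> A" "\<forall>X\<in>A. M \<subseteq> X \<longrightarrow> X = M"
    using Zorn_Lemma2 by blast
  have "maximal_ideal M"
    unfolding maximal_ideal_def
  proof (intro conjI allI impI)
    show "is_ideal M" "1 \<notin> M" using M(1) unfolding A_def by auto
    fix J assume "is_ideal J \<and> M \<subseteq> J \<and> 1 \<notin> J"
    moreover from this have "J \<in> A" using M(1) unfolding A_def by blast
    ultimately show "J = M" using M(2) by blast
  qed
  then show ?thesis using M unfolding A_def by blast
qed

lemma proper_ideal_in_local_max:
  "local_ring_max mt \<Longrightarrow> is_ideal I \<Longrightarrow> 1 \<notin> I \<Longrightarrow> I \<subseteq> mt"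
  using proper_ideal_in_maximal unfolding local_ring_max_def by blast

section \<open>The Cech complex of a family of generators\<close>

text \<open>The complex of \<open>cech_cocycle\<close> for a family g of generators indexed by a finite set S,
  with every localization A_{x_I} further localised at a fixed element c: \<open>loc_null g c I a\<close>
  says that a/1 vanishes in A_{c x_I}. As in \<open>cech_cocycle\<close>, a cochain of degree k is given by
  numerators z I over the denominators x_I^t, and \<open>coboundary g c S k z t\<close> says that
  z/x^t = d(y/x^u) in every A_{c x_I}.\<close>

definition gen_prod :: "(nat \<Rightarrow> 'a::comm_ring_1) \<Rightarrow> nat set \<Rightarrow> 'a" where
  "gen_prod g I = (\<Prod>i\<in>I. g i)"

definition loc_null :: "(nat \<Rightarrow> 'a::comm_ring_1) \<Rightarrow> 'a \<Rightarrow> nat set \<Rightarrow> 'a \<Rightarrow> bool" where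
  "loc_null g c I a \<longleftrightarrow> (\<exists>N. (c * gen_prod g I) ^ N * a = 0)"

definition cech_diff :: "(nat \<Rightarrow> 'a::comm_ring_1) \<Rightarrow> (nat set \<Rightarrow> 'a) \<Rightarrow> nat \<Rightarrow> nat set \<Rightarrow> 'a" where
  "cech_diff g z t J = (\<Sum>j\<in>J. cech_sign J j * z (J - {j}) * g j ^ t)"

definition cocycle ::
    "(nat \<Rightarrow> 'a::comm_ring_1) \<Rightarrow> 'a \<Rightarrow> nat set \<Rightarrow> nat \<Rightarrow> (nat set \<Rightarrow> 'a) \<Rightarrow> nat \<Rightarrow> bool" where
  "cocycle g c S k z t \<longleftrightarrow>
     (\<forall>J. J \<subseteq> S \<and> card J = Suc k \<longrightarrow> loc_null g c J (cech_diff g z t J))"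

definition coboundary ::
    "(nat \<Rightarrow> 'a::comm_ring_1) \<Rightarrow> 'a \<Rightarrow> nat set \<Rightarrow> nat \<Rightarrow> (nat set \<Rightarrow> 'a) \<Rightarrow> nat \<Rightarrow> bool" where
  "coboundary g c S k z t \<longleftrightarrow> (\<exists>y u. \<forall>I. I \<subseteq> S \<and> card I = k \<longrightarrow>
     loc_null g c I (z I * (c * gen_prod g I) ^ u - cech_diff g y u I * (c * gen_prod g I) ^ t))"

definition frob_nonzero :: "(nat \<Rightarrow> 'a::comm_ring_1) \<Rightarrow> nat set \<Rightarrow> nat \<Rightarrow> nat \<Rightarrow> bool" where
  "frob_nonzero g S q k \<longleftrightarrow>
     (\<exists>z t. cocycle g 1 S k z t \<and> \<not> coboundary g 1 S k (\<lambda>I. z I ^ q) (t * q))"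

lemma cech_sign_square: "cech_sign J j * cech_sign J j = (1::'a::comm_ring_1)"
  unfolding cech_sign_def by (simp flip: power_mult_distrib)

lemma cech_sign_square_left: "cech_sign J j * (cech_sign J j * a) = (a::'a::comm_ring_1)"
  by (simp add: mult.assoc[symmetric] cech_sign_square)

lemma cech_sign_swap:
  assumes "finite K" "i \<in> K" "j \<notin> K"
  shows "cech_sign K i * cech_sign (insert j K - {i}) j =
         - (cech_sign (insert j K) i * cech_sign (insert j K) j :: 'a::comm_ring_1)"
proof -
  have ij: "i \<noteq> j" using assms by auto
  have e1: "insert j K - {i} = insert j (K - {i})" using ij by auto
  have A1: "{j'\<in>insert j K. j' < j} = {j'\<in>K. j' < j}" by auto
  have A2: "{j'\<in>insert j (K - {i}). j' < j} = {j'\<in>K. j' < j} - {i}" by auto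
  show ?thesis
  proof (cases "i < j")
    case True
    have c1: "card {j'\<in>K. j' < j} = Suc (card ({j'\<in>K. j' < j} - {i}))"
      using True assms by (subst card_Suc_Diff1[symmetric]) auto
    have B: "{j'\<in>insert j K. j' < i} = {j'\<in>K. j' < i}" using True by auto
    show ?thesis unfolding cech_sign_def e1 A1 A2 B c1 by (simp add: algebra_simps)
  next
    case False
    then have ji: "j < i" using ij by auto
    have A2': "{j'\<in>K. j' < j} - {i} = {j'\<in>K. j' < j}" using ji by auto
    have B: "{j'\<in>insert j K. j' < i} = insert j {j'\<in>K. j' < i}" using ji by auto
    have c2: "card (insert j {j'\<in>K. j' < i}) = Suc (card {j'\<in>K. j' < i})"
      using assms by auto
    show ?thesis unfolding cech_sign_def e1 A1 A2 A2' B c2 by (simp add: algebra_simps)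
  qed
qed

lemma gen_prod_insert: "finite I \<Longrightarrow> j \<notin> I \<Longrightarrow> gen_prod g (insert j I) = g j * gen_prod g I"
  unfolding gen_prod_def by simp

lemma gen_prod_remove: "finite I \<Longrightarrow> j \<in> I \<Longrightarrow> gen_prod g I = g j * gen_prod g (I - {j})"
  unfolding gen_prod_def by (rule prod.remove)

lemma power_mult_eq_0_mono:
  assumes "(x::'a::comm_ring_1) ^ N * a = 0" "N \<le> M"
  shows "x ^ M * a = 0"
proof -
  obtain d where "M = N + d" using assms(2) le_Suc_ex by blast
  then have "x ^ M * a = x ^ d * (x ^ N * a)" by (simp add: power_add algebra_simps)
  then show ?thesis using assms(1) by simp
qed

lemma loc_null_0 [simp]: "loc_null g c I 0"
  unfolding loc_null_def by simp

lemma loc_null_mult: "loc_null g c I a \<Longrightarrow> loc_null g c I (b * a)"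
  unfolding loc_null_def
proof (elim exE)
  fix N assume "(c * gen_prod g I) ^ N * a = 0"
  then have "(c * gen_prod g I) ^ N * (b * a) = 0" by (simp add: mult.left_commute[of _ b])
  then show "\<exists>N. (c * gen_prod g I) ^ N * (b * a) = 0" ..
qed

lemma loc_null_add: "loc_null g c I a \<Longrightarrow> loc_null g c I b \<Longrightarrow> loc_null g c I (a + b)"
  unfolding loc_null_def
proof (elim exE)
  fix N M assume "(c * gen_prod g I) ^ N * a = 0" "(c * gen_prod g I) ^ M * b = 0"
  then have "(c * gen_prod g I) ^ (N + M) * a = 0" "(c * gen_prod g I) ^ (N + M) * b = 0"
    by (simp_all add: power_mult_eq_0_mono)
  then show "\<exists>N. (c * gen_prod g I) ^ N * (a + b) = 0"
    by (metis distrib_left add_0)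
qed

lemma loc_null_sum:
  "finite A \<Longrightarrow> (\<And>x. x \<in> A \<Longrightarrow> loc_null g c I (f x)) \<Longrightarrow> loc_null g c I (\<Sum>x\<in>A. f x)"
  by (induction A rule: finite_induct) (auto intro: loc_null_add)

lemma loc_null_cancel_gen_prod: "loc_null g c I (gen_prod g I ^ n * a) \<Longrightarrow> loc_null g c I a"
  unfolding loc_null_def
proof (elim exE)
  fix N assume "(c * gen_prod g I) ^ N * (gen_prod g I ^ n * a) = 0"
  then have "c ^ n * ((c * gen_prod g I) ^ N * (gen_prod g I ^ n * a)) = 0" by simp
  then have "(c * gen_prod g I) ^ (N + n) * a = 0"
    by (simp add: power_add power_mult_distrib algebra_simps)
  then show "\<exists>N. (c * gen_prod g I) ^ N * a = 0" by blast
qed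

lemma loc_null_uniform:
  assumes "finite F" "\<And>J. J \<in> F \<Longrightarrow> loc_null g c J (h J)"
  shows "\<exists>N. \<forall>J\<in>F. (c * gen_prod g J) ^ N * h J = 0"
  using assms
proof (induction F rule: finite_induct)
  case (insert x F)
  then obtain N where "\<forall>J\<in>F. (c * gen_prod g J) ^ N * h J = 0" by auto
  moreover obtain M where "(c * gen_prod g x) ^ M * h x = 0"
    using insert.prems unfolding loc_null_def by auto
  ultimately have "\<forall>J\<in>insert x F. (c * gen_prod g J) ^ (N + M) * h J = 0"
    by (auto intro: power_mult_eq_0_mono)
  then show ?case by blast
qed simp

lemma loc_null_insert:
  "finite K \<Longrightarrow> e \<notin> K \<Longrightarrow> loc_null g 1 (insert e K) a \<longleftrightarrow> loc_null g (g e) K a"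
  unfolding loc_null_def by (simp add: gen_prod_insert)

lemma loc_null_localize: "loc_null g 1 J a \<Longrightarrow> loc_null g c J a"
  unfolding loc_null_def
proof (elim exE)
  fix N assume "(1 * gen_prod g J) ^ N * a = 0"
  then have "(c * gen_prod g J) ^ N * a = 0" by (simp add: power_mult_distrib mult.assoc)
  then show "\<exists>N. (c * gen_prod g J) ^ N * a = 0" ..
qed

lemma cech_diff_cmult: "cech_diff g (\<lambda>K. a * z K) t J = a * cech_diff g z t J"
  unfolding cech_diff_def by (simp add: sum_distrib_left algebra_simps)

lemma cech_diff_add: "cech_diff g (\<lambda>K. z K + y K) t J = cech_diff g z t J + cech_diff g y t J"
  unfolding cech_diff_def by (simp add: sum.distrib algebra_simps)

lemma cech_diff_diff: "cech_diff g (\<lambda>K. z K - y K) t J = cech_diff g z t J - cech_diff g y t J"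
  unfolding cech_diff_def by (simp add: sum_subtractf algebra_simps)

lemma cech_diff_cong:
  "(\<And>j. j \<in> J \<Longrightarrow> z (J - {j}) = y (J - {j})) \<Longrightarrow> cech_diff g z t J = cech_diff g y t J"
  unfolding cech_diff_def by (rule sum.cong) auto

text \<open>y_K / x_K^u = y_K x_K^d / x_K^{u+d}, and the differential commutes with this rewriting.\<close>
lemma cech_diff_raise:
  assumes "finite I"
  shows "cech_diff g (\<lambda>K. y K * gen_prod g K ^ d) (u + d) I = gen_prod g I ^ d * cech_diff g y u I"
  unfolding cech_diff_def sum_distrib_left
proof (rule sum.cong[OF refl])
  fix j assume "j \<in> I"
  then have "gen_prod g I = g j * gen_prod g (I - {j})" by (rule gen_prod_remove[OF assms])
  then show "cech_sign I j * (y (I - {j}) * gen_prod g (I - {j}) ^ d) * g j ^ (u + d) =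
      gen_prod g I ^ d * (cech_sign I j * y (I - {j}) * g j ^ u)"
    by (simp add: power_add power_mult_distrib algebra_simps)
qed

lemma cocycle_subset: "cocycle g c T k z t \<Longrightarrow> S \<subseteq> T \<Longrightarrow> cocycle g c S k z t"
  unfolding cocycle_def by (meson order_trans)

lemma coboundary_subset: "coboundary g c T k z t \<Longrightarrow> S \<subseteq> T \<Longrightarrow> coboundary g c S k z t"
  unfolding coboundary_def by (meson order_trans)

lemma cocycle_localize: "cocycle g 1 S k z t \<Longrightarrow> cocycle g c S k z t"
  unfolding cocycle_def using loc_null_localize by blast

lemma cocycle_cong:
  assumes "\<And>I. I \<subseteq> S \<Longrightarrow> card I = k \<Longrightarrow> z I = z' I"
  shows "cocycle g c S k z t \<longleftrightarrow> cocycle g c S k z' t"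
proof -
  have "cech_diff g z t J = cech_diff g z' t J" if "J \<subseteq> S" "card J = Suc k" for J
  proof (rule cech_diff_cong)
    fix j assume "j \<in> J"
    moreover have "finite J" using that(2) by (auto intro: card_ge_0_finite)
    ultimately show "z (J - {j}) = z' (J - {j})"
      using that by (intro assms) (auto simp: card_Diff_singleton)
  qed
  then show ?thesis unfolding cocycle_def by auto
qed

lemma coboundary_cong:
  assumes "\<And>I. I \<subseteq> S \<Longrightarrow> card I = k \<Longrightarrow> z I = z' I"
  shows "coboundary g c S k z t \<longleftrightarrow> coboundary g c S k z' t"
  unfolding coboundary_def using assms by (metis (no_types, lifting))

lemma coboundary_raise_back:
  assumes "finite S" "coboundary g c S k (\<lambda>I. z I * gen_prod g I ^ d) (t + d)"
  shows "coboundary g c S k z t"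
proof -
  obtain y u where yu: "\<forall>I. I \<subseteq> S \<and> card I = k \<longrightarrow> loc_null g c I
      (z I * gen_prod g I ^ d * (c * gen_prod g I) ^ u - cech_diff g y u I * (c * gen_prod g I) ^ (t + d))"
    using assms unfolding coboundary_def by blast
  have "loc_null g c I
      (z I * (c * gen_prod g I) ^ u - cech_diff g (\<lambda>K. c ^ d * y K) u I * (c * gen_prod g I) ^ t)"
    if I: "I \<subseteq> S \<and> card I = k" for I
  proof (rule loc_null_cancel_gen_prod[where n = d])
    have "z I * gen_prod g I ^ d * (c * gen_prod g I) ^ u - cech_diff g y u I * (c * gen_prod g I) ^ (t + d)
        = gen_prod g I ^ d * (z I * (c * gen_prod g I) ^ u
            - cech_diff g (\<lambda>K. c ^ d * y K) u I * (c * gen_prod g I) ^ t)"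
      unfolding cech_diff_cmult by (simp add: power_add power_mult_distrib algebra_simps)
    moreover have "loc_null g c I (z I * gen_prod g I ^ d * (c * gen_prod g I) ^ u
        - cech_diff g y u I * (c * gen_prod g I) ^ (t + d))"
      using yu I by blast
    ultimately show "loc_null g c I (gen_prod g I ^ d * (z I * (c * gen_prod g I) ^ u
            - cech_diff g (\<lambda>K. c ^ d * y K) u I * (c * gen_prod g I) ^ t))"
      by simp
  qed
  then show ?thesis unfolding coboundary_def by blast
qed

context
  fixes q s :: nat
  assumes char_prime: "prime CHAR('a::comm_ring_1)" and q: "q = CHAR('a) ^ s"
begin

lemma frob_sum: "(\<Sum>i\<in>A. f i :: 'a) ^ q = (\<Sum>i\<in>A. f i ^ q)"
  using freshmans_dream_sum'[OF char_prime q] .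

lemma frob_exponent_pos: "0 < q"
  using prime_gt_0_nat[OF char_prime] q by simp

lemma frob_neg_1: "(-1 :: 'a) ^ q = -1"
proof -
  have "(0 :: 'a) = (1 + (-1)) ^ q" using frob_exponent_pos by (simp add: power_0_left)
  also have "\<dots> = 1 ^ q + (-1) ^ q" by (rule freshmans_dream'[OF char_prime q])
  finally show ?thesis by (simp add: eq_neg_iff_add_eq_0 add.commute)
qed

lemma frob_cech_sign: "(cech_sign J j :: 'a) ^ q = cech_sign J j"
  unfolding cech_sign_def by (simp flip: power_mult add: mult.commute[of _ q] power_mult frob_neg_1)

lemma cech_diff_frob: "cech_diff g (\<lambda>K. (z K :: 'a) ^ q) (t * q) J = cech_diff g z t J ^ q"
  unfolding cech_diff_def frob_sum
  by (rule sum.cong[OF refl]) (simp add: power_mult_distrib frob_cech_sign power_mult[symmetric] mult.commute)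

lemma loc_null_power: "loc_null g c I (a :: 'a) \<Longrightarrow> loc_null g c I (a ^ q)"
  unfolding loc_null_def
proof (elim exE)
  fix N assume "(c * gen_prod g I) ^ N * a = 0"
  then have "((c * gen_prod g I) ^ N * a) ^ q = 0" using frob_exponent_pos by (simp add: power_0_left)
  then have "(c * gen_prod g I) ^ (N * q) * a ^ q = 0" by (simp add: power_mult_distrib power_mult)
  then show "\<exists>N. (c * gen_prod g I) ^ N * a ^ q = 0" by blast
qed

lemma cocycle_frob: "cocycle g c S k (z :: nat set \<Rightarrow> 'a) t \<Longrightarrow> cocycle g c S k (\<lambda>I. z I ^ q) (t * q)"
  unfolding cocycle_def cech_diff_frob by (blast intro: loc_null_power)

end

lemma xprod_eq_gen_prod: "xprod xs I = gen_prod (nth xs) I"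
  unfolding xprod_def gen_prod_def ..

lemma loc_zero_iff_loc_null: "loc_zero xs I a \<longleftrightarrow> loc_null (nth xs) 1 I a"
  unfolding loc_zero_def loc_null_def xprod_eq_gen_prod by simp

lemma cech_d_eq_cech_diff: "cech_d xs = cech_diff (nth xs)"
  unfolding cech_d_def[abs_def] cech_diff_def[abs_def] ..

lemma cech_cocycle_iff: "cech_cocycle xs k z t \<longleftrightarrow> cocycle (nth xs) 1 {..<length xs} k z t"
  unfolding cech_cocycle_def cocycle_def loc_zero_iff_loc_null cech_d_eq_cech_diff ..

lemma cech_coboundary_iff: "cech_coboundary xs k z t \<longleftrightarrow> coboundary (nth xs) 1 {..<length xs} k z t"
proof (cases "k = 0")
  case True
  have "I \<subseteq> {..<length xs} \<and> card I = 0 \<longleftrightarrow> I = {}" for I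
    using finite_subset[of I "{..<length xs}"] by auto
  then show ?thesis
    unfolding cech_coboundary_def coboundary_def loc_zero_iff_loc_null True
    by (simp add: cech_diff_def gen_prod_def loc_null_def)
next
  case False
  then show ?thesis
    unfolding cech_coboundary_def coboundary_def loc_zero_iff_loc_null cech_d_eq_cech_diff
      xprod_eq_gen_prod by simp
qed

lemma frob_nonzero_on_iff: "frob_nonzero_on xs i s \<longleftrightarrow> frob_nonzero (nth xs) {..<length xs} (CHAR('a) ^ s) i"
  for xs :: "'a::comm_ring_1 list"
  unfolding frob_nonzero_on_def frob_nonzero_def cech_cocycle_iff cech_coboundary_iff ..

section \<open>Acyclicity after inverting an element of the ideal of the generators\<close>

lemma cech_sign_contraction_sum:
  assumes "finite K" "j \<notin> K"
  shows "(\<Sum>i\<in>K. cech_sign K i * cech_sign (insert j K - {i}) j * w (insert j K - {i}) * g i ^ t)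
         = w K * g j ^ t - cech_sign (insert j K) j * cech_diff g w t (insert j K)"
proof -
  let ?A = "insert j K"
  have "(\<Sum>i\<in>K. cech_sign K i * cech_sign (insert j K - {i}) j * w (insert j K - {i}) * g i ^ t)
     = (\<Sum>i\<in>K. - cech_sign ?A j * (cech_sign ?A i * w (?A - {i}) * g i ^ t))"
  proof (rule sum.cong[OF refl])
    fix i assume "i \<in> K"
    then have "cech_sign K i * cech_sign (insert j K - {i}) j = - (cech_sign ?A i * cech_sign ?A j :: 'a)"
      using cech_sign_swap assms by blast
    then show "cech_sign K i * cech_sign (insert j K - {i}) j * w (insert j K - {i}) * g i ^ t
       = - cech_sign ?A j * (cech_sign ?A i * w (?A - {i}) * g i ^ t)"
      by (simp add: algebra_simps)
  qed
  also have "\<dots> = - cech_sign ?A j * (\<Sum>i\<in>K. cech_sign ?A i * w (?A - {i}) * g i ^ t)"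
    by (simp add: sum_distrib_left)
  also have "(\<Sum>i\<in>K. cech_sign ?A i * w (?A - {i}) * g i ^ t) = cech_diff g w t ?A - cech_sign ?A j * w K * g j ^ t"
  proof -
    have "cech_diff g w t ?A = cech_sign ?A j * w (?A - {j}) * g j ^ t + (\<Sum>i\<in>K. cech_sign ?A i * w (?A - {i}) * g i ^ t)"
      unfolding cech_diff_def using assms by (simp add: sum.insert)
    moreover have "?A - {j} = K" using assms by auto
    ultimately show ?thesis by simp
  qed
  finally have e: "(\<Sum>i\<in>K. cech_sign K i * cech_sign (insert j K - {i}) j * w (insert j K - {i}) * g i ^ t)
       = - cech_sign ?A j * (cech_diff g w t ?A - cech_sign ?A j * w K * g j ^ t)" .
  have "- cech_sign ?A j * (cech_diff g w t ?A - cech_sign ?A j * w K * g j ^ t)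
      = (cech_sign ?A j * cech_sign ?A j) * (w K * g j ^ t) - cech_sign ?A j * cech_diff g w t ?A"
    by (simp add: algebra_simps)
  then show ?thesis using e by (simp only: cech_sign_square mult_1)
qed

text \<open>A contracting homotopy: when c^M = \<Sum> b_j g_j^{N+t}, \<open>cech_homotopy_identity\<close> says
  d (h w) = c^M w - h (d w). The factors g_j^N make h (d w) vanish in A_{c x_I} as soon as
  (c x_J)^N (d w)_J = 0 for all J.\<close>
definition cech_homotopy ::
    "nat set \<Rightarrow> (nat \<Rightarrow> 'a::comm_ring_1) \<Rightarrow> (nat \<Rightarrow> 'a) \<Rightarrow> nat \<Rightarrow> (nat set \<Rightarrow> 'a) \<Rightarrow> nat set \<Rightarrow> 'a" where
  "cech_homotopy S b g N w L = (\<Sum>j\<in>S - L. cech_sign (insert j L) j * b j * g j ^ N * w (insert j L))"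

lemma cech_homotopy_face:
  fixes g b :: "nat \<Rightarrow> 'a::comm_ring_1" and w :: "nat set \<Rightarrow> 'a" and N :: nat
  assumes "finite S" "K \<subseteq> S" "i \<in> K"
  defines "h \<equiv> cech_homotopy S b g N w"
  shows "cech_sign K i * h (K - {i}) * g i ^ t =
      b i * g i ^ (N + t) * w K +
      (\<Sum>j\<in>S - K. b j * g j ^ N * (cech_sign K i * cech_sign (insert j K - {i}) j * w (insert j K - {i}) * g i ^ t))"
proof -
  have SK: "S - (K - {i}) = insert i (S - K)" using assms by auto
  have ins: "insert i (K - {i}) = K" using assms(3) by auto
  have ins2: "\<And>j. j \<in> S - K \<Longrightarrow> insert j (K - {i}) = insert j K - {i}" using assms(3) by auto
  have "h (K - {i}) = (\<Sum>j\<in>insert i (S - K). cech_sign (insert j (K - {i})) j * b j * g j ^ N * w (insert j (K - {i})))"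
    unfolding h_def cech_homotopy_def SK ..
  also have "\<dots> = cech_sign (insert i (K - {i})) i * b i * g i ^ N * w (insert i (K - {i})) +
     (\<Sum>j\<in>S - K. cech_sign (insert j (K - {i})) j * b j * g j ^ N * w (insert j (K - {i})))"
    by (rule sum.insert) (use assms in auto)
  also have "\<dots> = cech_sign K i * b i * g i ^ N * w K +
     (\<Sum>j\<in>S - K. cech_sign (insert j K - {i}) j * b j * g j ^ N * w (insert j K - {i}))"
    unfolding ins using ins2 by (metis (no_types, lifting) sum.cong)
  finally have "h (K - {i}) = cech_sign K i * b i * g i ^ N * w K +
     (\<Sum>j\<in>S - K. cech_sign (insert j K - {i}) j * b j * g j ^ N * w (insert j K - {i}))" .
  then have "cech_sign K i * h (K - {i}) * g i ^ t =
     (cech_sign K i * cech_sign K i) * b i * g i ^ N * g i ^ t * w K +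
     (\<Sum>j\<in>S - K. cech_sign K i * (cech_sign (insert j K - {i}) j * b j * g j ^ N * w (insert j K - {i})) * g i ^ t)"
    by (simp add: sum_distrib_left sum_distrib_right algebra_simps)
  also have "\<dots> = b i * g i ^ (N + t) * w K +
    (\<Sum>j\<in>S - K. b j * g j ^ N * (cech_sign K i * cech_sign (insert j K - {i}) j * w (insert j K - {i}) * g i ^ t))"
    by (simp add: cech_sign_square power_add algebra_simps)
  finally show ?thesis .
qed

lemma cech_homotopy_identity:
  fixes g b :: "nat \<Rightarrow> 'a::comm_ring_1" and w :: "nat set \<Rightarrow> 'a" and N :: nat
  assumes "finite S" "K \<subseteq> S"
  defines "h \<equiv> cech_homotopy S b g N w"
  shows "cech_diff g h t K = (\<Sum>j\<in>S. b j * g j ^ (N + t)) * w K - cech_homotopy S b g N (cech_diff g w t) K"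
proof -
  have finK: "finite K" using assms finite_subset by blast
  have "cech_diff g h t K = (\<Sum>i\<in>K. cech_sign K i * h (K - {i}) * g i ^ t)" unfolding cech_diff_def by simp
  also have "\<dots> = (\<Sum>i\<in>K. b i * g i ^ (N + t) * w K +
      (\<Sum>j\<in>S - K. b j * g j ^ N * (cech_sign K i * cech_sign (insert j K - {i}) j * w (insert j K - {i}) * g i ^ t)))"
    using cech_homotopy_face[OF assms(1,2)] unfolding h_def by (rule sum.cong[OF refl])
  also have "\<dots> = (\<Sum>i\<in>K. b i * g i ^ (N + t)) * w K +
      (\<Sum>j\<in>S - K. b j * g j ^ N * (\<Sum>i\<in>K. cech_sign K i * cech_sign (insert j K - {i}) j * w (insert j K - {i}) * g i ^ t))"
    by (simp add: sum.distrib sum_distrib_right sum_distrib_left sum.swap[of _ K "S - K"])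
  also have "\<dots> = (\<Sum>i\<in>K. b i * g i ^ (N + t)) * w K +
      (\<Sum>j\<in>S - K. b j * g j ^ N * (w K * g j ^ t - cech_sign (insert j K) j * cech_diff g w t (insert j K)))"
    by (rule arg_cong2[where f="(+)", OF refl], rule sum.cong[OF refl]) (simp add: cech_sign_contraction_sum[OF finK])
  also have "\<dots> = (\<Sum>i\<in>K. b i * g i ^ (N + t)) * w K + (\<Sum>j\<in>S - K. b j * g j ^ (N + t)) * w K
      - (\<Sum>j\<in>S - K. b j * g j ^ N * (cech_sign (insert j K) j * cech_diff g w t (insert j K)))"
  proof -
    have "\<And>j. b j * g j ^ N * (w K * g j ^ t - cech_sign (insert j K) j * cech_diff g w t (insert j K))
      = b j * g j ^ (N + t) * w K - b j * g j ^ N * (cech_sign (insert j K) j * cech_diff g w t (insert j K))"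
      by (simp add: power_add algebra_simps)
    then have "(\<Sum>j\<in>S - K. b j * g j ^ N * (w K * g j ^ t - cech_sign (insert j K) j * cech_diff g w t (insert j K)))
      = (\<Sum>j\<in>S - K. b j * g j ^ (N + t)) * w K - (\<Sum>j\<in>S - K. b j * g j ^ N * (cech_sign (insert j K) j * cech_diff g w t (insert j K)))"
      by (simp add: sum_subtractf sum_distrib_right)
    then show ?thesis by simp
  qed
  also have "\<dots> = ((\<Sum>i\<in>K. b i * g i ^ (N + t)) + (\<Sum>j\<in>S - K. b j * g j ^ (N + t))) * w K
      - (\<Sum>j\<in>S - K. b j * g j ^ N * (cech_sign (insert j K) j * cech_diff g w t (insert j K)))"
    by (simp only: distrib_right)
  also have "(\<Sum>i\<in>K. b i * g i ^ (N + t)) + (\<Sum>j\<in>S - K. b j * g j ^ (N + t)) = (\<Sum>j\<in>S. b j * g j ^ (N + t))"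
    using sum.subset_diff[OF assms(2) assms(1), of "\<lambda>j. b j * g j ^ (N + t)"] by (simp only: add.commute)
  also have "(\<Sum>j\<in>S - K. b j * g j ^ N * (cech_sign (insert j K) j * cech_diff g w t (insert j K)))
      = cech_homotopy S b g N (cech_diff g w t) K"
    unfolding cech_homotopy_def by (simp add: mult_ac)
  finally show ?thesis .
qed

lemma finite_subsets_card: "finite S \<Longrightarrow> finite {J. J \<subseteq> S \<and> card J = k}"
  by (rule finite_subset[of _ "Pow S"]) auto

lemma loc_null_cech_homotopy:
  fixes g :: "nat \<Rightarrow> 'a::comm_ring_1"
  assumes S: "finite S" and I: "I \<subseteq> S" "card I = k"
    and N: "\<forall>J. J \<subseteq> S \<and> card J = Suc k \<longrightarrow> (c * gen_prod g J) ^ N * v J = 0"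
  shows "loc_null g c I (cech_homotopy S b g N v I)"
  unfolding cech_homotopy_def
proof (rule loc_null_sum)
  show "finite (S - I)" using S by simp
  have finI: "finite I" using I S finite_subset by blast
  fix j assume j: "j \<in> S - I"
  then have "insert j I \<subseteq> S \<and> card (insert j I) = Suc k" using I finI by auto
  then have "(c * gen_prod g (insert j I)) ^ N * v (insert j I) = 0" using N by blast
  moreover have "gen_prod g (insert j I) = g j * gen_prod g I"
    using finI j by (simp add: gen_prod_insert)
  then have "(c * gen_prod g (insert j I)) ^ N = (c * gen_prod g I) ^ N * g j ^ N"
    by (simp add: power_mult_distrib algebra_simps)
  ultimately have "(c * gen_prod g I) ^ N * (g j ^ N * v (insert j I)) = 0"
    by (simp add: mult.assoc)
  then have "loc_null g c I ((cech_sign (insert j I) j * b j) * (g j ^ N * v (insert j I)))"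
    unfolding loc_null_def by (blast intro: loc_null_mult[unfolded loc_null_def])
  then show "loc_null g c I (cech_sign (insert j I) j * b j * g j ^ N * v (insert j I))"
    by (simp add: mult.assoc)
qed

lemma localized_cocycle_is_coboundary:
  fixes g :: "nat \<Rightarrow> 'a::comm_ring_1"
  assumes S: "finite S" and c: "c \<in> ideal_gen (g ` S)" and w: "cocycle g c S k w t"
  shows "coboundary g c S k w t"
proof -
  obtain a where c: "c = (\<Sum>j\<in>S. a j * g j)"
    using c unfolding ideal_gen_image_finite[OF S] by blast
  let ?F = "{J. J \<subseteq> S \<and> card J = Suc k}"
  have "loc_null g c J (cech_diff g w t J)" if "J \<in> ?F" for J
    using w that unfolding cocycle_def by blast
  then obtain N where N: "\<forall>J\<in>?F. (c * gen_prod g J) ^ N * cech_diff g w t J = 0"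
    using loc_null_uniform[OF finite_subsets_card[OF S], where h="cech_diff g w t"] by blast
  obtain M where "c ^ M \<in> ideal_gen ((\<lambda>j. g j ^ (N + t)) ` S)"
    using power_in_ideal_gen_powers[OF S, where a=a and g=g and E="N + t"] unfolding c by blast
  then obtain b where b: "c ^ M = (\<Sum>j\<in>S. b j * g j ^ (N + t))"
    unfolding ideal_gen_image_finite[OF S] by blast
  define h where "h = cech_homotopy S b g N w"
  define y where "y L = h L * gen_prod g L ^ M" for L
  have "loc_null g c I (w I * (c * gen_prod g I) ^ (t + M) - cech_diff g y (t + M) I * (c * gen_prod g I) ^ t)"
    if I: "I \<subseteq> S" "card I = k" for I
  proof -
    define err where "err = cech_homotopy S b g N (cech_diff g w t) I"
    have yI: "cech_diff g y (t + M) I = gen_prod g I ^ M * cech_diff g h t I"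
      unfolding y_def using I S by (intro cech_diff_raise) (rule finite_subset)
    have hI: "cech_diff g h t I = c ^ M * w I - err"
      unfolding h_def err_def b by (rule cech_homotopy_identity[OF S I(1)])
    have "w I * (c * gen_prod g I) ^ (t + M) - cech_diff g y (t + M) I * (c * gen_prod g I) ^ t
        = (c * gen_prod g I) ^ t * gen_prod g I ^ M * err"
      unfolding yI hI by (simp add: power_add power_mult_distrib algebra_simps)
    moreover have "loc_null g c I err"
      unfolding err_def using S I N by (intro loc_null_cech_homotopy) auto
    ultimately show ?thesis by (simp add: loc_null_mult)
  qed
  then show ?thesis unfolding coboundary_def by blast
qed

section \<open>Redundant generators\<close>

text \<open>A cochain on S \<union> {e} is determined by its components z on S and, up to the sign of e,
  its components through e, which form a cochain w on S of one degree less.\<close>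
definition cech_glue :: "nat \<Rightarrow> (nat set \<Rightarrow> 'a::comm_ring_1) \<Rightarrow> (nat set \<Rightarrow> 'a) \<Rightarrow> nat set \<Rightarrow> 'a" where
  "cech_glue e z w = (\<lambda>I. if e \<in> I then cech_sign I e * w (I - {e}) else z I)"

lemma cech_diff_glue_outside: "e \<notin> K \<Longrightarrow> cech_diff g (cech_glue e z w) t K = cech_diff g z t K"
  unfolding cech_glue_def by (rule cech_diff_cong) auto

lemma cech_diff_glue_insert:
  assumes "finite K" "e \<notin> K"
  shows "cech_diff g (cech_glue e z w) t (insert e K) = cech_sign (insert e K) e * (g e ^ t * z K - cech_diff g w t K)"
proof -
  let ?A = "insert e K"
  have "cech_diff g (cech_glue e z w) t ?A = cech_sign ?A e * cech_glue e z w (?A - {e}) * g e ^ t +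
      (\<Sum>j\<in>K. cech_sign ?A j * cech_glue e z w (?A - {j}) * g j ^ t)"
    unfolding cech_diff_def using assms by (simp add: sum.insert)
  also have "cech_glue e z w (?A - {e}) = z K" unfolding cech_glue_def using assms by auto
  also have "(\<Sum>j\<in>K. cech_sign ?A j * cech_glue e z w (?A - {j}) * g j ^ t)
      = (\<Sum>j\<in>K. - cech_sign ?A e * (cech_sign K j * w (K - {j}) * g j ^ t))"
  proof (rule sum.cong[OF refl])
    fix j assume j: "j \<in> K"
    have r: "?A - {j} - {e} = K - {j}" using assms by auto
    have sw: "cech_sign K j * cech_sign (insert e K - {j}) e = - (cech_sign ?A j * cech_sign ?A e :: 'a)"
      using cech_sign_swap[OF assms(1) j assms(2)] .
    have "cech_sign ?A j * cech_sign (?A - {j}) e =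
       (cech_sign K j * cech_sign K j) * (cech_sign ?A j * cech_sign (?A - {j}) e :: 'a)"
      by (simp add: cech_sign_square)
    also have "\<dots> = cech_sign K j * cech_sign ?A j * (cech_sign K j * cech_sign (?A - {j}) e)"
      by (simp add: algebra_simps)
    also have "\<dots> = - cech_sign K j * (cech_sign ?A j * cech_sign ?A j) * cech_sign ?A e"
      using sw by (simp add: algebra_simps)
    also have "\<dots> = - cech_sign K j * cech_sign ?A e" by (simp add: cech_sign_square)
    finally have ss: "cech_sign ?A j * cech_sign (?A - {j}) e = - cech_sign K j * (cech_sign ?A e :: 'a)" .
    have "cech_glue e z w (?A - {j}) = cech_sign (?A - {j}) e * w (K - {j})"
      unfolding cech_glue_def using j assms r by auto
    then have "cech_sign ?A j * cech_glue e z w (?A - {j}) * g j ^ t = (cech_sign ?A j * cech_sign (?A - {j}) e) * (w (K - {j}) * g j ^ t)"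
      by (simp add: algebra_simps)
    also have "\<dots> = - cech_sign ?A e * (cech_sign K j * w (K - {j}) * g j ^ t)"
      unfolding ss by (simp add: algebra_simps)
    finally show "cech_sign ?A j * cech_glue e z w (?A - {j}) * g j ^ t = - cech_sign ?A e * (cech_sign K j * w (K - {j}) * g j ^ t)" .
  qed
  also have "\<dots> = - cech_sign ?A e * cech_diff g w t K" unfolding cech_diff_def by (simp add: sum_distrib_left)
  finally show ?thesis by (simp add: algebra_simps)
qed

text \<open>A cocycle on S extends, after enlarging denominators, to a cocycle on S \<union> {e}: its
  coboundary in the complex localised at g e supplies the missing components through e.\<close>
lemma cocycle_extend_redundant:
  fixes g :: "nat \<Rightarrow> 'a::comm_ring_1"
  assumes S: "finite S" and e: "e \<notin> S" and ge: "g e \<in> ideal_gen (g ` S)" and z: "cocycle g 1 S k z t"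
  shows "\<exists>d z'. cocycle g 1 (insert e S) k z' (t + d) \<and> (\<forall>I. e \<notin> I \<longrightarrow> z' I = z I * gen_prod g I ^ d)"
proof -
  obtain w u where w: "\<forall>K. K \<subseteq> S \<and> card K = k \<longrightarrow>
      loc_null g (g e) K (z K * (g e * gen_prod g K) ^ u - cech_diff g w u K * (g e * gen_prod g K) ^ t)"
    using localized_cocycle_is_coboundary[OF S ge cocycle_localize[OF z]] unfolding coboundary_def by blast
  define z' where "z' = cech_glue e (\<lambda>I. z I * gen_prod g I ^ u) (\<lambda>L. g e ^ (t + t) * (w L * gen_prod g L ^ t))"
  have "loc_null g 1 J (cech_diff g z' (t + u) J)" if J: "J \<subseteq> insert e S" "card J = Suc k" for J
  proof (cases "e \<in> J")
    case False
    have "finite J" using J S finite_subset by auto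
    then have "cech_diff g z' (t + u) J = gen_prod g J ^ u * cech_diff g z t J"
      unfolding z'_def cech_diff_glue_outside[OF False] by (rule cech_diff_raise)
    moreover have "J \<subseteq> S" using J False by blast
    ultimately show ?thesis using z J unfolding cocycle_def by (simp add: loc_null_mult)
  next
    case True
    define K where "K = J - {e}"
    have JK: "J = insert e K" and eK: "e \<notin> K" using True unfolding K_def by blast+
    have finK: "finite K" using J S finite_subset unfolding K_def by blast
    have KS: "K \<subseteq> S" "card K = k" using J True unfolding K_def by (auto simp: card_Diff_singleton)
    have "cech_diff g z' (t + u) J = cech_sign J e * (g e ^ (t + u) * (z K * gen_prod g K ^ u)
        - g e ^ (t + t) * cech_diff g (\<lambda>L. w L * gen_prod g L ^ t) (u + t) K)"
      unfolding z'_def JK cech_diff_glue_insert[OF finK eK] cech_diff_cmult by (simp add: add.commute)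
    also have "\<dots> = cech_sign J e * g e ^ t *
        (z K * (g e * gen_prod g K) ^ u - cech_diff g w u K * (g e * gen_prod g K) ^ t)"
      unfolding cech_diff_raise[OF finK] by (simp add: power_add power_mult_distrib algebra_simps)
    finally show ?thesis
      unfolding JK loc_null_insert[OF finK eK] using w KS by (simp add: loc_null_mult)
  qed
  moreover have "\<forall>I. e \<notin> I \<longrightarrow> z' I = z I * gen_prod g I ^ u" unfolding z'_def cech_glue_def by simp
  ultimately show ?thesis unfolding cocycle_def by blast
qed

lemma cech_glue_split: "cech_glue e z (\<lambda>K. cech_sign (insert e K) e * z (insert e K)) = z"
proof
  fix I
  show "cech_glue e z (\<lambda>K. cech_sign (insert e K) e * z (insert e K)) I = z I"
  proof (cases "e \<in> I")
    case True
    then have "insert e (I - {e}) = I" by blast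
    then show ?thesis unfolding cech_glue_def using True
      by (simp add: mult.assoc[symmetric] cech_sign_square)
  qed (simp add: cech_glue_def)
qed

text \<open>If the restriction of a cocycle z on S \<union> {e} is the coboundary of v, then the part of
  z through e, corrected by v, is a cocycle of one degree less in the complex localised at g e.\<close>
lemma cocycle_localized_correction:
  fixes g :: "nat \<Rightarrow> 'a::comm_ring_1"
  assumes S: "finite S" and e: "e \<notin> S" and z: "cocycle g 1 (insert e S) (Suc k) z t"
    and v: "\<forall>I. I \<subseteq> S \<and> card I = Suc k \<longrightarrow>
      loc_null g 1 I (z I * gen_prod g I ^ u - cech_diff g v u I * gen_prod g I ^ t)"
  defines "w \<equiv> \<lambda>K. cech_sign (insert e K) e * z (insert e K)"
  defines "W \<equiv> \<lambda>L. w L * gen_prod g L ^ u - g e ^ t * (v L * gen_prod g L ^ t)"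
  shows "cocycle g (g e) S k W (t + u)"
  unfolding cocycle_def
proof (intro allI impI)
  fix K assume K: "K \<subseteq> S \<and> card K = Suc k"
  have finK: "finite K" using K S finite_subset by blast
  have eK: "e \<notin> K" using K e by blast
  have "cech_diff g W (t + u) K = cech_diff g (\<lambda>L. w L * gen_prod g L ^ u) (t + u) K
      - g e ^ t * cech_diff g (\<lambda>L. v L * gen_prod g L ^ t) (u + t) K"
    unfolding W_def cech_diff_diff cech_diff_cmult by (simp add: add.commute)
  also have "\<dots> = gen_prod g K ^ u * cech_diff g w t K - g e ^ t * (gen_prod g K ^ t * cech_diff g v u K)"
    unfolding cech_diff_raise[OF finK] ..
  also have "\<dots> = (- (gen_prod g K ^ u)) * (g e ^ t * z K - cech_diff g w t K)
      + g e ^ t * (z K * gen_prod g K ^ u - cech_diff g v u K * gen_prod g K ^ t)"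
    by (simp add: algebra_simps)
  finally have dW: "cech_diff g W (t + u) K = \<dots>" .
  have "insert e K \<subseteq> insert e S \<and> card (insert e K) = Suc (Suc k)"
    using K finK eK by auto
  then have "loc_null g 1 (insert e K) (cech_diff g z t (insert e K))"
    using z unfolding cocycle_def by blast
  then have "loc_null g 1 (insert e K) (cech_sign (insert e K) e * (g e ^ t * z K - cech_diff g w t K))"
    unfolding cech_diff_glue_insert[OF finK eK, symmetric] w_def cech_glue_split .
  then have "loc_null g (g e) K (cech_sign (insert e K) e * (cech_sign (insert e K) e * (g e ^ t * z K - cech_diff g w t K)))"
    unfolding loc_null_insert[OF finK eK] by (rule loc_null_mult)
  then have "loc_null g (g e) K (g e ^ t * z K - cech_diff g w t K)"
    by (simp add: mult.assoc[symmetric] cech_sign_square)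
  moreover have "loc_null g (g e) K (z K * gen_prod g K ^ u - cech_diff g v u K * gen_prod g K ^ t)"
    using v K by (blast intro: loc_null_localize)
  ultimately show "loc_null g (g e) K (cech_diff g W (t + u) K)"
    unfolding dW by (intro loc_null_add loc_null_mult)
qed

text \<open>Conversely, gluing v with a primitive U of the corrected cocycle gives a primitive of z.\<close>
lemma coboundary_glue:
  fixes g :: "nat \<Rightarrow> 'a::comm_ring_1"
  assumes S: "finite S" and e: "e \<notin> S"
    and v: "\<forall>I. I \<subseteq> S \<and> card I = Suc k \<longrightarrow>
      loc_null g 1 I (z I * gen_prod g I ^ u - cech_diff g v u I * gen_prod g I ^ t)"
  defines "w \<equiv> \<lambda>K. cech_sign (insert e K) e * z (insert e K)"
  defines "W \<equiv> \<lambda>L. w L * gen_prod g L ^ u - g e ^ t * (v L * gen_prod g L ^ t)"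
  assumes U: "\<forall>L. L \<subseteq> S \<and> card L = k \<longrightarrow> loc_null g (g e) L
      (W L * (g e * gen_prod g L) ^ u' - cech_diff g U u' L * (g e * gen_prod g L) ^ (t + u))"
  shows "coboundary g 1 (insert e S) (Suc k) z t"
proof -
  define Y where "Y = cech_glue e (\<lambda>I. v I * gen_prod g I ^ u') (\<lambda>M. - (g e ^ (u + u)) * (U M * gen_prod g M ^ u))"
  have "loc_null g 1 I (z I * gen_prod g I ^ (u + u') - cech_diff g Y (u + u') I * gen_prod g I ^ t)"
    if I: "I \<subseteq> insert e S" "card I = Suc k" for I
  proof (cases "e \<in> I")
    case False
    have "finite I" using I S finite_subset by auto
    then have "cech_diff g Y (u + u') I = gen_prod g I ^ u' * cech_diff g v u I"
      unfolding Y_def cech_diff_glue_outside[OF False] by (rule cech_diff_raise)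
    then have "z I * gen_prod g I ^ (u + u') - cech_diff g Y (u + u') I * gen_prod g I ^ t
        = gen_prod g I ^ u' * (z I * gen_prod g I ^ u - cech_diff g v u I * gen_prod g I ^ t)"
      by (simp add: power_add algebra_simps)
    moreover have "I \<subseteq> S" using I False by blast
    ultimately show ?thesis using v I by (simp add: loc_null_mult)
  next
    case True
    define K where "K = I - {e}"
    have IK: "I = insert e K" and eK: "e \<notin> K" using True unfolding K_def by blast+
    have finK: "finite K" using I S finite_subset unfolding K_def by blast
    have KS: "K \<subseteq> S" "card K = k" using I True unfolding K_def by (auto simp: card_Diff_singleton)
    have "cech_diff g Y (u + u') I = cech_sign I e * (g e ^ (u + u') * (v K * gen_prod g K ^ u')
        + g e ^ (u + u) * cech_diff g (\<lambda>M. U M * gen_prod g M ^ u) (u' + u) K)"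
      unfolding Y_def IK cech_diff_glue_insert[OF finK eK] cech_diff_cmult by (simp add: add.commute)
    also have "\<dots> = cech_sign I e * (g e ^ (u + u') * (v K * gen_prod g K ^ u')
        + g e ^ (u + u) * (gen_prod g K ^ u * cech_diff g U u' K))"
      unfolding cech_diff_raise[OF finK] ..
    finally have "z I * gen_prod g I ^ (u + u') - cech_diff g Y (u + u') I * gen_prod g I ^ t
        = cech_sign I e * g e ^ u * (W K * (g e * gen_prod g K) ^ u' - cech_diff g U u' K * (g e * gen_prod g K) ^ (t + u))"
      unfolding IK gen_prod_insert[OF finK eK] W_def w_def
      by (simp add: power_add power_mult_distrib algebra_simps cech_sign_square_left)
    moreover have "loc_null g 1 (insert e K) (cech_sign I e * g e ^ u *
        (W K * (g e * gen_prod g K) ^ u' - cech_diff g U u' K * (g e * gen_prod g K) ^ (t + u)))"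
      unfolding loc_null_insert[OF finK eK] using U KS by (blast intro: loc_null_mult)
    ultimately show ?thesis unfolding IK by simp
  qed
  then show ?thesis unfolding coboundary_def mult_1 by blast
qed

lemma coboundary_extend_redundant:
  fixes g :: "nat \<Rightarrow> 'a::comm_ring_1"
  assumes S: "finite S" and e: "e \<notin> S" and ge: "g e \<in> ideal_gen (g ` S)"
    and z: "cocycle g 1 (insert e S) k z t" and z_S: "coboundary g 1 S k z t"
  shows "coboundary g 1 (insert e S) k z t"
proof (cases k)
  case 0
  have "I \<subseteq> T \<and> card I = 0 \<longleftrightarrow> I = {}" if "finite T" for I T :: "nat set"
    using finite_subset[OF _ that, of I] by auto
  then show ?thesis
    using z_S S unfolding coboundary_def 0 by simp
next
  case (Suc k')
  obtain v u where v: "\<forall>I. I \<subseteq> S \<and> card I = Suc k' \<longrightarrow>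
      loc_null g 1 I (z I * gen_prod g I ^ u - cech_diff g v u I * gen_prod g I ^ t)"
    using z_S unfolding coboundary_def Suc mult_1 by blast
  define W where "W L = cech_sign (insert e L) e * z (insert e L) * gen_prod g L ^ u
      - g e ^ t * (v L * gen_prod g L ^ t)" for L
  have "cocycle g (g e) S k' W (t + u)"
    unfolding W_def using cocycle_localized_correction[OF S e z[unfolded Suc] v] .
  then obtain U u' where "\<forall>L. L \<subseteq> S \<and> card L = k' \<longrightarrow> loc_null g (g e) L
      (W L * (g e * gen_prod g L) ^ u' - cech_diff g U u' L * (g e * gen_prod g L) ^ (t + u))"
    using localized_cocycle_is_coboundary[OF S ge] unfolding coboundary_def by blast
  then show ?thesis
    unfolding Suc W_def by (rule coboundary_glue[OF S e v])
qed

lemma frob_nonzero_insert_redundant: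
  fixes g :: "nat \<Rightarrow> 'a::comm_ring_1"
  assumes S: "finite S" and e: "e \<notin> S" and ge: "g e \<in> ideal_gen (g ` S)"
    and p: "prime CHAR('a)" and q: "q = CHAR('a) ^ s"
  shows "frob_nonzero g (insert e S) q k \<longleftrightarrow> frob_nonzero g S q k"
proof
  assume "frob_nonzero g (insert e S) q k"
  then obtain z t where cz: "cocycle g 1 (insert e S) k z t" and ncb: "\<not> coboundary g 1 (insert e S) k (\<lambda>I. z I ^ q) (t * q)"
    unfolding frob_nonzero_def by blast
  have "cocycle g 1 S k z t" using cocycle_subset[OF cz] by blast
  moreover have "\<not> coboundary g 1 S k (\<lambda>I. z I ^ q) (t * q)"
  proof
    assume "coboundary g 1 S k (\<lambda>I. z I ^ q) (t * q)"
    moreover have "cocycle g 1 (insert e S) k (\<lambda>I. z I ^ q) (t * q)" by (rule cocycle_frob[OF p q cz])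
    ultimately have "coboundary g 1 (insert e S) k (\<lambda>I. z I ^ q) (t * q)"
      using coboundary_extend_redundant[OF S e ge] by blast
    then show False using ncb by blast
  qed
  ultimately show "frob_nonzero g S q k" unfolding frob_nonzero_def by blast
next
  assume "frob_nonzero g S q k"
  then obtain z t where cz: "cocycle g 1 S k z t" and ncb: "\<not> coboundary g 1 S k (\<lambda>I. z I ^ q) (t * q)"
    unfolding frob_nonzero_def by blast
  obtain d z' where cz': "cocycle g 1 (insert e S) k z' (t + d)" and zz: "\<forall>I. e \<notin> I \<longrightarrow> z' I = z I * gen_prod g I ^ d"
    using cocycle_extend_redundant[OF S e ge cz] by blast
  have "\<not> coboundary g 1 (insert e S) k (\<lambda>I. z' I ^ q) ((t + d) * q)"
  proof
    assume "coboundary g 1 (insert e S) k (\<lambda>I. z' I ^ q) ((t + d) * q)"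
    then have "coboundary g 1 S k (\<lambda>I. z' I ^ q) ((t + d) * q)" by (rule coboundary_subset) blast
    moreover have "\<And>I. I \<subseteq> S \<Longrightarrow> z' I ^ q = z I ^ q * gen_prod g I ^ (d * q)"
      using zz e by (auto simp: power_mult_distrib power_mult[symmetric] mult.commute)
    ultimately have "coboundary g 1 S k (\<lambda>I. z I ^ q * gen_prod g I ^ (d * q)) (t * q + d * q)"
      using coboundary_cong[where z="\<lambda>I. z' I ^ q" and z'="\<lambda>I. z I ^ q * gen_prod g I ^ (d * q)"]
      by (simp add: add_mult_distrib)
    then have "coboundary g 1 S k (\<lambda>I. z I ^ q) (t * q)" by (rule coboundary_raise_back[OF S])
    then show False using ncb by blast
  qed
  then show "frob_nonzero g (insert e S) q k" using cz' unfolding frob_nonzero_def by blast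
qed

lemma frob_nonzero_union_redundant:
  fixes g :: "nat \<Rightarrow> 'a::comm_ring_1"
  assumes S: "finite S" and E: "finite E" and dis: "S \<inter> E = {}"
    and gens: "g ` E \<subseteq> ideal_gen (g ` S)"
    and p: "prime CHAR('a)" and q: "q = CHAR('a) ^ s"
  shows "frob_nonzero g (S \<union> E) q k \<longleftrightarrow> frob_nonzero g S q k"
  using E dis gens
proof (induction E rule: finite_induct)
  case (insert e E)
  have "g e \<in> ideal_gen (g ` S)" using insert.prems by blast
  also have "ideal_gen (g ` S) \<subseteq> ideal_gen (g ` (S \<union> E))"
    by (intro ideal_gen_mono image_mono) blast
  finally have ge: "g e \<in> ideal_gen (g ` (S \<union> E))" .
  have "frob_nonzero g (S \<union> insert e E) q k \<longleftrightarrow> frob_nonzero g (insert e (S \<union> E)) q k" by simp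
  also have "\<dots> \<longleftrightarrow> frob_nonzero g (S \<union> E) q k"
    using S insert by (intro frob_nonzero_insert_redundant[OF _ _ ge p q]) auto
  also have "\<dots> \<longleftrightarrow> frob_nonzero g S q k" using insert by blast
  finally show ?case .
qed simp

section \<open>Independence of the choice of generators\<close>

text \<open>Signs depend on the order of the indices, so the complex is invariant only under
  order-preserving relabelling of the generators.\<close>
context
  fixes h :: "nat \<Rightarrow> nat" and S :: "nat set" and g g' :: "nat \<Rightarrow> 'a::comm_ring_1"
  assumes mono: "strict_mono_on S h" and relabel: "\<And>i. i \<in> S \<Longrightarrow> g' i = g (h i)"
begin

lemma inj_relabel: "inj_on h S"
  using mono by (rule strict_mono_on_imp_inj_on)

lemma card_relabel: "I \<subseteq> S \<Longrightarrow> card (h ` I) = card I"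
  using inj_relabel by (meson card_image inj_on_subset)

lemma gen_prod_relabel: "I \<subseteq> S \<Longrightarrow> gen_prod g (h ` I) = gen_prod g' I"
  unfolding gen_prod_def using relabel inj_on_subset[OF inj_relabel]
  by (auto simp: prod.reindex intro!: prod.cong)

lemma cech_sign_relabel:
  assumes "I \<subseteq> S" "j \<in> S"
  shows "cech_sign (h ` I) (h j) = cech_sign I j"
proof -
  have "{j'\<in>h ` I. j' < h j} = h ` {j'\<in>I. j' < j}"
    using assms strict_mono_on_less[OF mono] by auto
  moreover have "card (h ` {j'\<in>I. j' < j}) = card {j'\<in>I. j' < j}"
    using assms by (intro card_relabel) auto
  ultimately show ?thesis
    unfolding cech_sign_def by simp
qed

lemma cech_diff_relabel:
  assumes "I \<subseteq> S"
  shows "cech_diff g z t (h ` I) = cech_diff g' (\<lambda>K. z (h ` K)) t I"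
  unfolding cech_diff_def sum.reindex[OF inj_on_subset[OF inj_relabel assms]] comp_def
proof (rule sum.cong[OF refl])
  fix j assume j: "j \<in> I"
  have "j \<in> S" using j assms by blast
  moreover have "h ` I - {h j} = h ` (I - {j})"
    using assms j \<open>j \<in> S\<close> inj_on_image_set_diff[OF inj_relabel, of I "{j}"] by auto
  ultimately show "cech_sign (h ` I) (h j) * z (h ` I - {h j}) * g (h j) ^ t =
      cech_sign I j * z (h ` (I - {j})) * g' j ^ t"
    by (simp add: cech_sign_relabel[OF assms] relabel)
qed

lemma loc_null_relabel: "I \<subseteq> S \<Longrightarrow> loc_null g c (h ` I) a \<longleftrightarrow> loc_null g' c I a"
  unfolding loc_null_def by (simp add: gen_prod_relabel)

lemma relabel_preimage_image: "I \<subseteq> S \<Longrightarrow> S \<inter> h -` (h ` I) = I"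
  using inj_relabel unfolding inj_on_def by blast

lemma all_subsets_relabel:
  "(\<forall>J. J \<subseteq> h ` S \<and> card J = n \<longrightarrow> P J) \<longleftrightarrow> (\<forall>I. I \<subseteq> S \<and> card I = n \<longrightarrow> P (h ` I))"
proof (intro iffI allI impI)
  fix I assume "\<forall>J. J \<subseteq> h ` S \<and> card J = n \<longrightarrow> P J" "I \<subseteq> S \<and> card I = n"
  then show "P (h ` I)" using card_relabel image_mono by metis
next
  fix J assume P: "\<forall>I. I \<subseteq> S \<and> card I = n \<longrightarrow> P (h ` I)" and J: "J \<subseteq> h ` S \<and> card J = n"
  define I where "I = S \<inter> h -` J"
  have "J = h ` I" "I \<subseteq> S" using J unfolding I_def by auto
  then show "P J" using P J card_relabel by metis
qed

lemma cocycle_relabel: "cocycle g c (h ` S) k z t \<longleftrightarrow> cocycle g' c S k (\<lambda>I. z (h ` I)) t"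
  unfolding cocycle_def all_subsets_relabel by (simp add: loc_null_relabel cech_diff_relabel)

lemma coboundary_relabel:
  "coboundary g c (h ` S) k z t \<longleftrightarrow> coboundary g' c S k (\<lambda>I. z (h ` I)) t"
proof
  assume "coboundary g c (h ` S) k z t"
  then obtain y u where "\<forall>I. I \<subseteq> S \<and> card I = k \<longrightarrow> loc_null g c (h ` I)
      (z (h ` I) * (c * gen_prod g (h ` I)) ^ u - cech_diff g y u (h ` I) * (c * gen_prod g (h ` I)) ^ t)"
    unfolding coboundary_def all_subsets_relabel by blast
  then have "\<forall>I. I \<subseteq> S \<and> card I = k \<longrightarrow> loc_null g' c I
      (z (h ` I) * (c * gen_prod g' I) ^ u - cech_diff g' (\<lambda>K. y (h ` K)) u I * (c * gen_prod g' I) ^ t)"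
    by (simp add: loc_null_relabel cech_diff_relabel gen_prod_relabel)
  then show "coboundary g' c S k (\<lambda>I. z (h ` I)) t"
    unfolding coboundary_def by blast
next
  assume "coboundary g' c S k (\<lambda>I. z (h ` I)) t"
  then obtain y u where y: "\<forall>I. I \<subseteq> S \<and> card I = k \<longrightarrow> loc_null g' c I
      (z (h ` I) * (c * gen_prod g' I) ^ u - cech_diff g' y u I * (c * gen_prod g' I) ^ t)"
    unfolding coboundary_def by blast
  have "cech_diff g' y u I = cech_diff g' (\<lambda>K. y (S \<inter> h -` (h ` K))) u I" if "I \<subseteq> S" for I
  proof (rule cech_diff_cong)
    have "I - {j} \<subseteq> S" for j using that by blast
    then show "y (I - {j}) = y (S \<inter> h -` h ` (I - {j}))" for j
      by (simp add: relabel_preimage_image)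
  qed
  with y have "\<forall>I. I \<subseteq> S \<and> card I = k \<longrightarrow> loc_null g c (h ` I) (z (h ` I) * (c * gen_prod g (h ` I)) ^ u
      - cech_diff g (\<lambda>J. y (S \<inter> h -` J)) u (h ` I) * (c * gen_prod g (h ` I)) ^ t)"
    by (simp add: loc_null_relabel cech_diff_relabel gen_prod_relabel)
  then show "coboundary g c (h ` S) k z t"
    unfolding coboundary_def all_subsets_relabel by blast
qed

lemma frob_nonzero_relabel: "frob_nonzero g (h ` S) q k \<longleftrightarrow> frob_nonzero g' S q k"
proof
  assume "frob_nonzero g (h ` S) q k"
  then show "frob_nonzero g' S q k"
    unfolding frob_nonzero_def cocycle_relabel coboundary_relabel by blast
next
  assume "frob_nonzero g' S q k"
  then obtain z t where z: "cocycle g' 1 S k z t" "\<not> coboundary g' 1 S k (\<lambda>I. z I ^ q) (t * q)"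
    unfolding frob_nonzero_def by blast
  define z' where "z' J = z (S \<inter> h -` J)" for J
  have z': "z' (h ` I) = z I" if "I \<subseteq> S" for I
    unfolding z'_def using that by (simp add: relabel_preimage_image)
  have "cocycle g' 1 S k (\<lambda>I. z' (h ` I)) t \<longleftrightarrow> cocycle g' 1 S k z t"
    by (rule cocycle_cong) (simp add: z')
  moreover have "coboundary g' 1 S k (\<lambda>I. z' (h ` I) ^ q) (t * q) \<longleftrightarrow>
      coboundary g' 1 S k (\<lambda>I. z I ^ q) (t * q)"
    by (rule coboundary_cong) (simp add: z')
  ultimately have "cocycle g 1 (h ` S) k z' t" "\<not> coboundary g 1 (h ` S) k (\<lambda>I. z' I ^ q) (t * q)"
    unfolding cocycle_relabel coboundary_relabel using z by simp_all
  then show "frob_nonzero g (h ` S) q k"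
    unfolding frob_nonzero_def by blast
qed

end

lemma image_nth_lessThan: "nth xs ` {..<length xs} = set xs"
  by (auto simp: in_set_conv_nth)

lemma frob_nonzero_generators_indep:
  fixes xs ys :: "'a::comm_ring_1 list"
  assumes gen: "ideal_gen (set xs) = ideal_gen (set ys)"
    and p: "prime CHAR('a)" and q: "q = CHAR('a) ^ s"
  shows "frob_nonzero (nth xs) {..<length xs} q k \<longleftrightarrow> frob_nonzero (nth ys) {..<length ys} q k"
proof -
  define n m where "n = length xs" and "m = length ys"
  define g where "g = nth (xs @ ys)"
  have gx: "g ` {..<n} = set xs"
    unfolding g_def n_def image_nth_lessThan[symmetric] by (auto simp: nth_append)
  have shift: "(\<lambda>i. n + i) ` {..<m} = {n..<n + m}"
    by (simp add: lessThan_atLeast0 add.commute)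
  have "g ` {n..<n + m} = (\<lambda>i. g (n + i)) ` {..<m}"
    unfolding shift[symmetric] image_image ..
  also have "\<dots> = nth ys ` {..<m}"
    by (rule image_cong) (simp_all add: g_def n_def nth_append)
  finally have gy: "g ` {n..<n + m} = set ys"
    unfolding m_def image_nth_lessThan .
  have ys_xs: "set ys \<subseteq> ideal_gen (set xs)"
    by (auto simp: gen intro: in_ideal_gen)
  have xs_ys: "set xs \<subseteq> ideal_gen (set ys)"
    by (auto simp: gen[symmetric] intro: in_ideal_gen)
  have "frob_nonzero g (id ` {..<n}) q k \<longleftrightarrow> frob_nonzero (nth xs) {..<n} q k"
    by (rule frob_nonzero_relabel) (auto simp: g_def n_def nth_append strict_mono_on_def)
  then have "frob_nonzero (nth xs) {..<n} q k \<longleftrightarrow> frob_nonzero g {..<n} q k"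
    by simp
  also have "\<dots> \<longleftrightarrow> frob_nonzero g ({..<n} \<union> {n..<n + m}) q k"
    using gx gy ys_xs by (intro frob_nonzero_union_redundant[OF _ _ _ _ p q, symmetric]) auto
  also have "\<dots> \<longleftrightarrow> frob_nonzero g ({n..<n + m} \<union> {..<n}) q k"
    by (simp add: Un_commute)
  also have "\<dots> \<longleftrightarrow> frob_nonzero g {n..<n + m} q k"
    using gx gy xs_ys by (intro frob_nonzero_union_redundant[OF _ _ _ _ p q]) auto
  also have "\<dots> \<longleftrightarrow> frob_nonzero (nth ys) {..<m} q k"
    unfolding shift[symmetric] by (rule frob_nonzero_relabel) (auto simp: g_def m_def n_def nth_append strict_mono_on_def)
  finally show ?thesis unfolding n_def m_def .
qed

section \<open>Flatness\<close>

lemma flat_relation: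
  fixes f :: "'a::comm_ring_1 \<Rightarrow> 'b::comm_ring_1" and a :: "'c \<Rightarrow> 'a" and w :: "'c \<Rightarrow> 'b"
  assumes fl: "flat_hom f" and C: "finite C" and rel: "(\<Sum>c\<in>C. f (a c) * w c) = 0"
  shows "\<exists>(k::nat) v y. (\<forall>c\<in>C. w c = (\<Sum>j<k. f (v c j) * y j)) \<and> (\<forall>j<k. (\<Sum>c\<in>C. a c * v c j) = 0)"
proof -
  obtain h where h: "bij_betw h {..<card C} C"
    using ex_bij_betw_nat_finite[OF C] unfolding atLeast0LessThan by blast
  have "(\<Sum>i<card C. f (a (h i)) * w (h i)) = 0"
    using rel sum.reindex_bij_betw[OF h, of "\<lambda>c. f (a c) * w c"] by simp
  then obtain k :: nat and v y where v: "\<forall>i<card C. w (h i) = (\<Sum>j<k. f (v i j) * y j)"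
      and rel': "\<forall>j<k. (\<Sum>i<card C. a (h i) * v i j) = 0"
    using fl[unfolded flat_hom_def, rule_format, where n="card C" and a="\<lambda>i. a (h i)" and b="\<lambda>i. w (h i)"]
    by blast
  define h' where "h' = inv_into {..<card C} h"
  have h': "h (h' c) = c" "h' c < card C" if "c \<in> C" for c
    using h that unfolding h'_def bij_betw_def by (auto intro: f_inv_into_f)
      (metis inv_into_into lessThan_iff)
  have "\<forall>c\<in>C. w c = (\<Sum>j<k. f (v (h' c) j) * y j)"
    using v h' by metis
  moreover have "(\<Sum>c\<in>C. a c * v (h' c) j) = (\<Sum>i<card C. a (h i) * v i j)" for j
    using sum.reindex_bij_betw[OF h, of "\<lambda>c. a c * v (h' c) j"] h unfolding h'_def bij_betw_def
    by (auto simp: inv_into_f_f intro: sum.cong)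
  ultimately show ?thesis using rel' by (intro exI[of _ k] exI[of _ "\<lambda>c. v (h' c)"] exI[of _ y]) auto
qed

lemma hom_sum_mult_sum:
  assumes hom: "ring_homomorphism f"
  shows "(\<Sum>j\<in>A. f (v j) * (\<Sum>l\<in>B. f (u j l) * y l)) = (\<Sum>l\<in>B. f (\<Sum>j\<in>A. v j * u j l) * y l)"
  by (simp add: hom_sum[OF hom] hom_mult[OF hom] sum_distrib_left sum_distrib_right sum.swap[of _ A]
      algebra_simps)

lemma flat_solutions:
  fixes f :: "'a::comm_ring_1 \<Rightarrow> 'b::comm_ring_1" and L :: "'r \<Rightarrow> 'c \<Rightarrow> 'a" and w :: "'c \<Rightarrow> 'b"
  assumes hom: "ring_homomorphism f" and fl: "flat_hom f" and C: "finite C" and R: "finite R"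
    and rel: "\<forall>r\<in>R. (\<Sum>c\<in>C. f (L r c) * w c) = 0"
  shows "\<exists>(k::nat) v y. (\<forall>c\<in>C. w c = (\<Sum>j<k. f (v c j) * y j)) \<and>
      (\<forall>j<k. \<forall>r\<in>R. (\<Sum>c\<in>C. L r c * v c j) = 0)"
  using R rel
proof (induction R rule: finite_induct)
  case empty
  have "(\<Sum>c\<in>C. f 0 * w c) = 0" using hom_0[OF hom] by simp
  then show ?case using flat_relation[OF fl C, of "\<lambda>_. 0" w] by auto
next
  case (insert r R)
  then obtain k :: nat and v y where w: "\<forall>c\<in>C. w c = (\<Sum>j<k. f (v c j) * y j)"
      and v: "\<forall>j<k. \<forall>r\<in>R. (\<Sum>c\<in>C. L r c * v c j) = 0"
    by blast
  define a where "a j = (\<Sum>c\<in>C. L r c * v c j)" for j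
  have "(\<Sum>j<k. f (a j) * y j) = (\<Sum>c\<in>C. f (L r c) * (\<Sum>j<k. f (v c j) * y j))"
    unfolding a_def hom_sum_mult_sum[OF hom] ..
  also have "\<dots> = 0" using insert.prems w by simp
  finally obtain k' :: nat and v' y' where y: "\<forall>j\<in>{..<k}. y j = (\<Sum>l<k'. f (v' j l) * y' l)"
      and v': "\<forall>l<k'. (\<Sum>j\<in>{..<k}. a j * v' j l) = 0"
    using flat_relation[OF fl, of "{..<k}" a y] by blast
  define V where "V c l = (\<Sum>j<k. v c j * v' j l)" for c l
  have "w c = (\<Sum>l<k'. f (V c l) * y' l)" if "c \<in> C" for c
    using that w y unfolding V_def hom_sum_mult_sum[OF hom, symmetric] by simp
  moreover have "(\<Sum>c\<in>C. L r' c * V c l) = (\<Sum>j<k. (\<Sum>c\<in>C. L r' c * v c j) * v' j l)" for r' l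
    unfolding V_def by (simp add: sum_distrib_left sum_distrib_right sum.swap[of _ C] algebra_simps)
  ultimately show ?case
    using v v' unfolding a_def by (intro exI[of _ k'] exI[of _ V] exI[of _ y']) auto
qed

lemma is_ideal_solution_scalars:
  "is_ideal {a. \<exists>w. \<forall>r\<in>R. (\<Sum>c\<in>C. L r c * w c) = a * v r}"
  unfolding is_ideal_def
proof (intro conjI ballI allI)
  show "0 \<in> {a. \<exists>w. \<forall>r\<in>R. (\<Sum>c\<in>C. L r c * w c) = a * v r}"
    by (intro CollectI exI[of _ "\<lambda>_. 0"]) simp
next
  fix a b assume "a \<in> {a. \<exists>w. \<forall>r\<in>R. (\<Sum>c\<in>C. L r c * w c) = a * v r}"
    "b \<in> {a. \<exists>w. \<forall>r\<in>R. (\<Sum>c\<in>C. L r c * w c) = a * v r}"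
  then obtain wa wb where "\<forall>r\<in>R. (\<Sum>c\<in>C. L r c * wa c) = a * v r" "\<forall>r\<in>R. (\<Sum>c\<in>C. L r c * wb c) = b * v r"
    by blast
  then have "\<forall>r\<in>R. (\<Sum>c\<in>C. L r c * (wa c + wb c)) = (a + b) * v r"
    by (simp add: distrib_left sum.distrib distrib_right)
  then show "a + b \<in> {a. \<exists>w. \<forall>r\<in>R. (\<Sum>c\<in>C. L r c * w c) = a * v r}"
    by (intro CollectI exI[of _ "\<lambda>c. wa c + wb c"])
next
  fix s a assume "a \<in> {a. \<exists>w. \<forall>r\<in>R. (\<Sum>c\<in>C. L r c * w c) = a * v r}"
  then obtain wa where "\<forall>r\<in>R. (\<Sum>c\<in>C. L r c * wa c) = a * v r" by blast
  moreover have "(\<Sum>c\<in>C. L r c * (s * wa c)) = s * (\<Sum>c\<in>C. L r c * wa c)" for r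
    by (simp add: sum_distrib_left algebra_simps)
  ultimately have "\<forall>r\<in>R. (\<Sum>c\<in>C. L r c * (s * wa c)) = (s * a) * v r"
    by simp
  then show "s * a \<in> {a. \<exists>w. \<forall>r\<in>R. (\<Sum>c\<in>C. L r c * w c) = a * v r}"
    by (intro CollectI exI[of _ "\<lambda>c. s * wa c"])
qed

locale flat_local_hom =
  fixes f :: "'a::comm_ring_1 \<Rightarrow> 'b::comm_ring_1" and mt :: "'a set" and m :: "'b set"
  assumes hom: "ring_homomorphism f" and flat: "flat_hom f"
    and local_mt: "local_ring_max mt" and image_mt: "f ` mt \<subseteq> m"
    and ideal_m: "is_ideal m" and proper_m: "1 \<notin> m"
begin

text \<open>The scalars a for which a v lies in the image of L form an ideal of A. Homogenising the
  system and applying flatness produces elements of this ideal whose images generate the unit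
  ideal of B, so the ideal is not contained in mt.\<close>
lemma solvable_descends:
  fixes L :: "'r \<Rightarrow> 'c \<Rightarrow> 'a" and v :: "'r \<Rightarrow> 'a" and w :: "'c \<Rightarrow> 'b"
  assumes C: "finite C" and R: "finite R"
    and sol: "\<forall>r\<in>R. (\<Sum>c\<in>C. f (L r c) * w c) = f (v r)"
  shows "\<exists>w'. \<forall>r\<in>R. (\<Sum>c\<in>C. L r c * w' c) = v r"
proof -
  define L' where "L' r co = (case co of None \<Rightarrow> - v r | Some c \<Rightarrow> L r c)" for r co
  define W where "W co = (case co of None \<Rightarrow> 1 | Some c \<Rightarrow> w c)" for co
  have sum_option: "(\<Sum>co\<in>insert None (Some ` C). h co) = h None + (\<Sum>c\<in>C. h (Some c))"
    for h :: "'c option \<Rightarrow> 'x::comm_monoid_add"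
    using C by (simp add: sum.reindex)
  have "\<forall>r\<in>R. (\<Sum>co\<in>insert None (Some ` C). f (L' r co) * W co) = 0"
    using sol unfolding sum_option L'_def W_def by (simp add: hom_uminus[OF hom])
  then obtain k :: nat and V y where W: "\<forall>co\<in>insert None (Some ` C). W co = (\<Sum>j<k. f (V co j) * y j)"
      and V: "\<forall>j<k. \<forall>r\<in>R. (\<Sum>co\<in>insert None (Some ` C). L' r co * V co j) = 0"
    using flat_solutions[OF hom flat _ R, of "insert None (Some ` C)" L' W] C by blast
  define I where "I = {a. \<exists>w. \<forall>r\<in>R. (\<Sum>c\<in>C. L r c * w c) = a * v r}"
  have isI: "is_ideal I" unfolding I_def by (rule is_ideal_solution_scalars)
  have VI: "V None j \<in> I" if "j < k" for j
  proof -
    have "\<forall>r\<in>R. (\<Sum>c\<in>C. L r c * V (Some c) j) = V None j * v r"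
      using V that unfolding sum_option L'_def by (auto simp: algebra_simps eq_neg_iff_add_eq_0)
    then show ?thesis unfolding I_def by (intro CollectI exI[of _ "\<lambda>c. V (Some c) j"])
  qed
  have "1 \<in> I"
  proof (rule ccontr)
    assume "1 \<notin> I"
    then have "I \<subseteq> mt" using proper_ideal_in_local_max[OF local_mt isI] by blast
    then have "f (V None j) * y j \<in> m" if "j < k" for j
      using VI[OF that] image_mt ideal_mult[OF ideal_m] by (metis image_subset_iff mult.commute subsetD)
    then have "(\<Sum>j<k. f (V None j) * y j) \<in> m"
      by (intro ideal_sum[OF ideal_m]) simp
    then show False using W proper_m unfolding W_def by simp
  qed
  then show ?thesis unfolding I_def by simp
qed

end

section \<open>Base change of the Cech complex\<close>

context
  fixes f :: "'a::comm_ring_1 \<Rightarrow> 'b::comm_ring_1"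
  assumes hom: "ring_homomorphism f"
begin

lemma gen_prod_hom: "gen_prod (\<lambda>i. f (x i)) I = f (gen_prod x I)"
  unfolding gen_prod_def by (simp add: hom_prod[OF hom])

lemma cech_diff_hom: "cech_diff (\<lambda>i. f (x i)) (\<lambda>K. f (z K)) t J = f (cech_diff x z t J)"
  unfolding cech_diff_def by (simp add: hom_sum[OF hom] hom_mult[OF hom] hom_power[OF hom] hom_cech_sign[OF hom])

lemma loc_null_hom: "loc_null x c I a \<Longrightarrow> loc_null (\<lambda>i. f (x i)) (f c) I (f a)"
  unfolding loc_null_def
proof (elim exE)
  fix N assume "(c * gen_prod x I) ^ N * a = 0"
  then have "f ((c * gen_prod x I) ^ N * a) = 0" by (simp add: hom_0[OF hom])
  then have "(f c * gen_prod (\<lambda>i. f (x i)) I) ^ N * f a = 0"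
    by (simp add: hom_mult[OF hom] hom_power[OF hom] gen_prod_hom)
  then show "\<exists>N. (f c * gen_prod (\<lambda>i. f (x i)) I) ^ N * f a = 0" ..
qed

lemma cocycle_hom: "cocycle x 1 S k z t \<Longrightarrow> cocycle (\<lambda>i. f (x i)) 1 S k (\<lambda>K. f (z K)) t"
  unfolding cocycle_def cech_diff_hom using loc_null_hom hom_1[OF hom] by metis

lemma coboundary_hom: "coboundary x 1 S k z t \<Longrightarrow> coboundary (\<lambda>i. f (x i)) 1 S k (\<lambda>K. f (z K)) t"
  unfolding coboundary_def
proof (elim exE)
  fix y u assume y: "\<forall>I. I \<subseteq> S \<and> card I = k \<longrightarrow>
      loc_null x 1 I (z I * (1 * gen_prod x I) ^ u - cech_diff x y u I * (1 * gen_prod x I) ^ t)"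
  have "loc_null (\<lambda>i. f (x i)) 1 I (f (z I) * (1 * gen_prod (\<lambda>i. f (x i)) I) ^ u
      - cech_diff (\<lambda>i. f (x i)) (\<lambda>K. f (y K)) u I * (1 * gen_prod (\<lambda>i. f (x i)) I) ^ t)"
    if "I \<subseteq> S \<and> card I = k" for I
  proof -
    have "loc_null x 1 I (z I * (1 * gen_prod x I) ^ u - cech_diff x y u I * (1 * gen_prod x I) ^ t)"
      using y that by blast
    then have "loc_null (\<lambda>i. f (x i)) (f 1) I
        (f (z I * (1 * gen_prod x I) ^ u - cech_diff x y u I * (1 * gen_prod x I) ^ t))"
      by (rule loc_null_hom)
    then show ?thesis
      by (simp add: hom_diff[OF hom] hom_mult[OF hom] hom_power[OF hom] hom_1[OF hom] gen_prod_hom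
          cech_diff_hom)
  qed
  then show "\<exists>y u. \<forall>I. I \<subseteq> S \<and> card I = k \<longrightarrow> loc_null (\<lambda>i. f (x i)) 1 I
      (f (z I) * (1 * gen_prod (\<lambda>i. f (x i)) I) ^ u - cech_diff (\<lambda>i. f (x i)) y u I * (1 * gen_prod (\<lambda>i. f (x i)) I) ^ t)"
    by blast
qed

end

definition cech_matrix :: "(nat \<Rightarrow> 'a::comm_ring_1) \<Rightarrow> nat \<Rightarrow> nat set \<Rightarrow> nat set \<Rightarrow> 'a" where
  "cech_matrix g t J I = (\<Sum>j\<in>J. if I = J - {j} then cech_sign J j * g j ^ t else 0)"

lemma cech_matrix_hom:
  "ring_homomorphism f \<Longrightarrow> f (cech_matrix x t J I) = cech_matrix (\<lambda>i. f (x i)) t J I"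
  unfolding cech_matrix_def
  by (simp add: hom_sum hom_0 hom_mult hom_power hom_cech_sign if_distrib cong: if_cong)

lemma cech_diff_matrix:
  assumes C: "finite C" and faces: "\<And>j. j \<in> J \<Longrightarrow> J - {j} \<in> C"
  shows "cech_diff g z t J = (\<Sum>I\<in>C. cech_matrix g t J I * z I)"
proof -
  have "(\<Sum>I\<in>C. cech_matrix g t J I * z I) =
      (\<Sum>I\<in>C. \<Sum>j\<in>J. if I = J - {j} then cech_sign J j * g j ^ t * z I else 0)"
    unfolding cech_matrix_def sum_distrib_right by (rule sum.cong[OF refl], rule sum.cong[OF refl]) simp
  also have "\<dots> = (\<Sum>j\<in>J. \<Sum>I\<in>C. if I = J - {j} then cech_sign J j * g j ^ t * z I else 0)"
    by (rule sum.swap)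
  also have "\<dots> = (\<Sum>j\<in>J. cech_sign J j * g j ^ t * z (J - {j}))"
    using faces by (intro sum.cong[OF refl]) (simp add: sum.delta[OF C])
  finally show ?thesis unfolding cech_diff_def by (simp add: algebra_simps)
qed

lemma cech_diff_as_matrix:
  assumes S: "finite S" and J: "J \<subseteq> S"
  shows "cech_diff g z t J = (\<Sum>I\<in>{I. I \<subseteq> S \<and> card I = card J - 1}. cech_matrix g t J I * z I)"
proof (rule cech_diff_matrix)
  show "finite {I. I \<subseteq> S \<and> card I = card J - 1}" by (rule finite_subsets_card[OF S])
  have "finite J" using J S by (rule finite_subset)
  then have "card (J - {j}) = card J - 1" if "j \<in> J" for j
    using that by (simp add: card_Diff_singleton)
  moreover have "J - {j} \<subseteq> S" for j
    using J by blast
  ultimately show "J - {j} \<in> {I. I \<subseteq> S \<and> card I = card J - 1}" if "j \<in> J" for j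
    using that by blast
qed

lemma coboundary_equation_as_matrix:
  assumes "finite S" "I \<subseteq> S"
  shows "gen_prod g I ^ N * (z I * gen_prod g I ^ u - cech_diff g y u I * gen_prod g I ^ t) = 0 \<longleftrightarrow>
    (\<Sum>K\<in>{K. K \<subseteq> S \<and> card K = card I - 1}. gen_prod g I ^ (N + t) * cech_matrix g u I K * y K)
      = gen_prod g I ^ (N + u) * z I"
proof -
  have "(\<Sum>K\<in>{K. K \<subseteq> S \<and> card K = card I - 1}. gen_prod g I ^ (N + t) * cech_matrix g u I K * y K)
      = gen_prod g I ^ (N + t) * cech_diff g y u I"
    unfolding cech_diff_as_matrix[OF assms] by (simp add: sum_distrib_left mult.assoc)
  moreover have "gen_prod g I ^ N * (z I * gen_prod g I ^ u - cech_diff g y u I * gen_prod g I ^ t)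
      = gen_prod g I ^ (N + u) * z I - gen_prod g I ^ (N + t) * cech_diff g y u I"
    by (simp add: power_add algebra_simps)
  ultimately show ?thesis by auto
qed

lemma coboundary_zero: "coboundary g c S k (\<lambda>_. 0) t"
proof -
  have d0: "cech_diff g (\<lambda>_. 0) 0 I = 0" for I unfolding cech_diff_def by simp
  have "\<forall>I. I \<subseteq> S \<and> card I = k \<longrightarrow> loc_null g c I (0 * (c * gen_prod g I) ^ 0 - cech_diff g (\<lambda>_. 0) 0 I * (c * gen_prod g I) ^ t)"
    unfolding d0 by simp
  then show ?thesis unfolding coboundary_def by (intro exI[of _ "\<lambda>_. 0"] exI[of _ 0])
qed

lemma coboundary_cmult:
  assumes "coboundary g c S k z t"
  shows "coboundary g c S k (\<lambda>I. b * z I) t"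
proof -
  obtain y u where yu: "\<forall>I. I \<subseteq> S \<and> card I = k \<longrightarrow> loc_null g c I (z I * (c * gen_prod g I) ^ u - cech_diff g y u I * (c * gen_prod g I) ^ t)"
    using assms unfolding coboundary_def by auto
  have "\<forall>I. I \<subseteq> S \<and> card I = k \<longrightarrow> loc_null g c I (b * z I * (c * gen_prod g I) ^ u - cech_diff g (\<lambda>K. b * y K) u I * (c * gen_prod g I) ^ t)"
  proof (intro allI impI)
    fix I assume I: "I \<subseteq> S \<and> card I = k"
    have "loc_null g c I (z I * (c * gen_prod g I) ^ u - cech_diff g y u I * (c * gen_prod g I) ^ t)" using yu[rule_format, OF I] .
    then have "loc_null g c I (b * (z I * (c * gen_prod g I) ^ u - cech_diff g y u I * (c * gen_prod g I) ^ t))" by (rule loc_null_mult)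
    then show "loc_null g c I (b * z I * (c * gen_prod g I) ^ u - cech_diff g (\<lambda>K. b * y K) u I * (c * gen_prod g I) ^ t)"
      unfolding cech_diff_cmult by (simp add: algebra_simps)
  qed
  then show ?thesis unfolding coboundary_def by (intro exI[of _ "\<lambda>K. b * y K"] exI[of _ u])
qed

lemma coboundary_add:
  assumes S: "finite S" and c1: "coboundary g 1 S k z1 t" and c2: "coboundary g 1 S k z2 t"
  shows "coboundary g 1 S k (\<lambda>I. z1 I + z2 I) t"
proof -
  obtain y1 u1 where y1: "\<forall>I. I \<subseteq> S \<and> card I = k \<longrightarrow> loc_null g 1 I (z1 I * (1 * gen_prod g I) ^ u1 - cech_diff g y1 u1 I * (1 * gen_prod g I) ^ t)"
    using c1 unfolding coboundary_def by auto
  obtain y2 u2 where y2: "\<forall>I. I \<subseteq> S \<and> card I = k \<longrightarrow> loc_null g 1 I (z2 I * (1 * gen_prod g I) ^ u2 - cech_diff g y2 u2 I * (1 * gen_prod g I) ^ t)"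
    using c2 unfolding coboundary_def by auto
  define y where "y = (\<lambda>K. y1 K * gen_prod g K ^ u2 + y2 K * gen_prod g K ^ u1)"
  have "\<forall>I. I \<subseteq> S \<and> card I = k \<longrightarrow> loc_null g 1 I ((z1 I + z2 I) * (1 * gen_prod g I) ^ (u1 + u2) - cech_diff g y (u1 + u2) I * (1 * gen_prod g I) ^ t)"
  proof (intro allI impI)
    fix I assume I: "I \<subseteq> S \<and> card I = k"
    have finI: "finite I" using I S finite_subset by blast
    have dy: "cech_diff g y (u1 + u2) I = gen_prod g I ^ u2 * cech_diff g y1 u1 I + gen_prod g I ^ u1 * cech_diff g y2 u2 I"
    proof -
      have "cech_diff g y (u1 + u2) I = cech_diff g (\<lambda>K. y1 K * gen_prod g K ^ u2) (u1 + u2) I + cech_diff g (\<lambda>K. y2 K * gen_prod g K ^ u1) (u2 + u1) I"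
        unfolding y_def cech_diff_add by (simp add: add.commute)
      also have "\<dots> = gen_prod g I ^ u2 * cech_diff g y1 u1 I + gen_prod g I ^ u1 * cech_diff g y2 u2 I"
        unfolding cech_diff_raise[OF finI, where y=y1 and d=u2 and u=u1 and g=g]
          cech_diff_raise[OF finI, where y=y2 and d=u1 and u=u2 and g=g] ..
      finally show ?thesis .
    qed
    have eq: "(z1 I + z2 I) * (1 * gen_prod g I) ^ (u1 + u2) - cech_diff g y (u1 + u2) I * (1 * gen_prod g I) ^ t
      = gen_prod g I ^ u2 * (z1 I * (1 * gen_prod g I) ^ u1 - cech_diff g y1 u1 I * (1 * gen_prod g I) ^ t)
        + gen_prod g I ^ u1 * (z2 I * (1 * gen_prod g I) ^ u2 - cech_diff g y2 u2 I * (1 * gen_prod g I) ^ t)"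
      unfolding dy by (simp add: power_add algebra_simps)
    show "loc_null g 1 I ((z1 I + z2 I) * (1 * gen_prod g I) ^ (u1 + u2) - cech_diff g y (u1 + u2) I * (1 * gen_prod g I) ^ t)"
      unfolding eq using y1[rule_format, OF I] y2[rule_format, OF I] by (intro loc_null_add loc_null_mult)
  qed
  then show ?thesis unfolding coboundary_def by (intro exI[of _ y] exI[of _ "u1 + u2"])
qed

lemma coboundary_sum:
  assumes S: "finite S" and A: "finite A" and all: "\<And>l. l \<in> A \<Longrightarrow> coboundary g 1 S k (zz l) t"
  shows "coboundary g 1 S k (\<lambda>I. \<Sum>l\<in>A. zz l I) t"
  using A all
proof (induction A rule: finite_induct)
  case empty
  show ?case using coboundary_zero by simp
next
  case (insert a A)
  have "coboundary g 1 S k (\<lambda>I. zz a I + (\<Sum>l\<in>A. zz l I)) t"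
    using insert by (intro coboundary_add[OF S]) auto
  then show ?case using insert by simp
qed

lemma cocycle_decompose:
  fixes f :: "'a::comm_ring_1 \<Rightarrow> 'b::comm_ring_1" and x :: "nat \<Rightarrow> 'a"
  assumes hom: "ring_homomorphism f" and flat: "flat_hom f" and S: "finite S"
    and w: "cocycle (\<lambda>i. f (x i)) 1 S k w t"
  shows "\<exists>(n::nat) v y. (\<forall>I. I \<subseteq> S \<and> card I = k \<longrightarrow> w I = (\<Sum>l<n. f (v l I) * y l))
           \<and> (\<forall>l<n. cocycle x 1 S k (v l) t)"
proof -
  define Col where "Col = {I. I \<subseteq> S \<and> card I = k}"
  define Row where "Row = {J. J \<subseteq> S \<and> card J = Suc k}"
  have "loc_null (\<lambda>i. f (x i)) 1 J (cech_diff (\<lambda>i. f (x i)) w t J)" if "J \<in> Row" for J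
    using w that unfolding cocycle_def Row_def by blast
  moreover have "finite Row" unfolding Row_def by (rule finite_subsets_card[OF S])
  ultimately obtain N where "\<forall>J\<in>Row. (1 * gen_prod (\<lambda>i. f (x i)) J) ^ N * cech_diff (\<lambda>i. f (x i)) w t J = 0"
    using loc_null_uniform[where h="cech_diff (\<lambda>i. f (x i)) w t"] by blast
  then have N: "\<forall>J\<in>Row. gen_prod (\<lambda>i. f (x i)) J ^ N * cech_diff (\<lambda>i. f (x i)) w t J = 0"
    by simp
  define L where "L J I = gen_prod x J ^ N * cech_matrix x t J I" for J I
  have matrix: "gen_prod g J ^ N * cech_diff g z t J = (\<Sum>I\<in>Col. (gen_prod g J ^ N * cech_matrix g t J I) * z I)"
    if "J \<in> Row" for g :: "nat \<Rightarrow> 'c::comm_ring_1" and z J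
    using that cech_diff_as_matrix[OF S, of J g z t]
    unfolding Row_def Col_def by (simp add: sum_distrib_left mult.assoc)
  have "(\<Sum>I\<in>Col. f (L J I) * w I) = gen_prod (\<lambda>i. f (x i)) J ^ N * cech_diff (\<lambda>i. f (x i)) w t J"
    if "J \<in> Row" for J
    unfolding matrix[OF that] L_def
    by (simp add: hom_mult[OF hom] hom_power[OF hom] cech_matrix_hom[OF hom] gen_prod_hom[OF hom])
  then have "\<forall>J\<in>Row. (\<Sum>I\<in>Col. f (L J I) * w I) = 0"
    using N by simp
  then obtain n :: nat and V y where w_eq: "\<forall>I\<in>Col. w I = (\<Sum>l<n. f (V I l) * y l)"
      and V: "\<forall>l<n. \<forall>J\<in>Row. (\<Sum>I\<in>Col. L J I * V I l) = 0"
    using flat_solutions[OF hom flat finite_subsets_card[OF S] finite_subsets_card[OF S]]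
    unfolding Col_def Row_def by blast
  have "cocycle x 1 S k (\<lambda>I. V I l) t" if "l < n" for l
    unfolding cocycle_def
  proof (intro allI impI)
    fix J assume "J \<subseteq> S \<and> card J = Suc k"
    then have J: "J \<in> Row" unfolding Row_def by blast
    have "gen_prod x J ^ N * cech_diff x (\<lambda>I. V I l) t J = 0"
      using V that J unfolding matrix[OF J] L_def by simp
    then show "loc_null x 1 J (cech_diff x (\<lambda>I. V I l) t J)"
      unfolding loc_null_def by auto
  qed
  then show ?thesis
    using w_eq unfolding Col_def by (intro exI[of _ n] exI[of _ "\<lambda>l I. V I l"] exI[of _ y]) auto
qed

context flat_local_hom
begin

lemma coboundary_descends:
  assumes S: "finite S" and z: "coboundary (\<lambda>i. f (x i)) 1 S k (\<lambda>I. f (z I)) t"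
  shows "coboundary x 1 S k z t"
proof -
  define xb where "xb = (\<lambda>i. f (x i))"
  define Col where "Col = {I. I \<subseteq> S \<and> card I = k}"
  define Col' where "Col' = {K. K \<subseteq> S \<and> card K = k - 1}"
  have xb: "gen_prod xb I = f (gen_prod x I)" "cech_matrix xb u I K = f (cech_matrix x u I K)" for u I K
    unfolding xb_def by (simp_all add: gen_prod_hom[OF hom] cech_matrix_hom[OF hom])
  obtain y u where "\<forall>I. I \<subseteq> S \<and> card I = k \<longrightarrow> loc_null xb 1 I
      (f (z I) * (1 * gen_prod xb I) ^ u - cech_diff xb y u I * (1 * gen_prod xb I) ^ t)"
    using z unfolding coboundary_def xb_def by blast
  then have "loc_null xb 1 I (f (z I) * (1 * gen_prod xb I) ^ u - cech_diff xb y u I * (1 * gen_prod xb I) ^ t)"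
    if "I \<in> Col" for I
    using that unfolding Col_def by blast
  moreover have "finite Col" unfolding Col_def by (rule finite_subsets_card[OF S])
  ultimately obtain N where "\<forall>I\<in>Col. (1 * gen_prod xb I) ^ N *
      (f (z I) * (1 * gen_prod xb I) ^ u - cech_diff xb y u I * (1 * gen_prod xb I) ^ t) = 0"
    using loc_null_uniform[of Col xb 1
        "\<lambda>I. f (z I) * (1 * gen_prod xb I) ^ u - cech_diff xb y u I * (1 * gen_prod xb I) ^ t"]
    by blast
  then have N: "\<forall>I\<in>Col. gen_prod xb I ^ N * (f (z I) * gen_prod xb I ^ u - cech_diff xb y u I * gen_prod xb I ^ t) = 0"
    by simp
  define L where "L I K = gen_prod x I ^ (N + t) * cech_matrix x u I K" for I K
  define v where "v I = gen_prod x I ^ (N + u) * z I" for I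
  have "\<forall>I\<in>Col. (\<Sum>K\<in>Col'. f (L I K) * y K) = f (v I)"
  proof
    fix I assume I: "I \<in> Col"
    show "(\<Sum>K\<in>Col'. f (L I K) * y K) = f (v I)"
    proof -
      have "I \<subseteq> S" "card I - 1 = k - 1" using I unfolding Col_def by auto
      then show ?thesis
        using N I coboundary_equation_as_matrix[OF S, of I xb N "\<lambda>I. f (z I)" u y t]
        unfolding Col'_def L_def v_def xb by (simp add: hom_mult[OF hom] hom_power[OF hom])
    qed
  qed
  then obtain y' where y': "\<forall>I\<in>Col. (\<Sum>K\<in>Col'. L I K * y' K) = v I"
    using solvable_descends[of Col' Col L y v] finite_subsets_card[OF S]
    unfolding Col_def Col'_def by blast
  have "gen_prod x I ^ N * (z I * gen_prod x I ^ u - cech_diff x y' u I * gen_prod x I ^ t) = 0"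
    if I: "I \<subseteq> S" "card I = k" for I
    using y' I coboundary_equation_as_matrix[OF S I(1), of x N z u y' t]
    unfolding Col_def Col'_def L_def v_def by simp
  then show ?thesis
    unfolding coboundary_def loc_null_def by (intro exI[of _ y'] exI[of _ u]) auto
qed

lemma frob_nonzero_imp_base_change:
  assumes S: "finite S" and "frob_nonzero x S q k"
  shows "frob_nonzero (\<lambda>i. f (x i)) S q k"
proof -
  obtain z t where z: "cocycle x 1 S k z t" "\<not> coboundary x 1 S k (\<lambda>I. z I ^ q) (t * q)"
    using assms(2) unfolding frob_nonzero_def by blast
  have "\<not> coboundary (\<lambda>i. f (x i)) 1 S k (\<lambda>I. f (z I ^ q)) (t * q)"
  proof
    assume "coboundary (\<lambda>i. f (x i)) 1 S k (\<lambda>I. f (z I ^ q)) (t * q)"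
    then have "coboundary x 1 S k (\<lambda>I. z I ^ q) (t * q)" by (rule coboundary_descends[OF S])
    with z(2) show False ..
  qed
  moreover have "cocycle (\<lambda>i. f (x i)) 1 S k (\<lambda>K. f (z K)) t"
    using z(1) by (rule cocycle_hom[OF hom])
  ultimately show ?thesis
    unfolding frob_nonzero_def hom_power[OF hom] by blast
qed

lemma frob_nonzero_of_base_change:
  assumes S: "finite S" and char_b: "prime CHAR('b)" "q = CHAR('b) ^ s"
    and "frob_nonzero (\<lambda>i. f (x i)) S q k"
  shows "frob_nonzero x S q k"
proof -
  obtain w t where w: "cocycle (\<lambda>i. f (x i)) 1 S k w t"
      and not_cob: "\<not> coboundary (\<lambda>i. f (x i)) 1 S k (\<lambda>I. w I ^ q) (t * q)"
    using assms(4) unfolding frob_nonzero_def by blast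
  obtain n :: nat and v y where w_eq: "\<forall>I. I \<subseteq> S \<and> card I = k \<longrightarrow> w I = (\<Sum>l<n. f (v l I) * y l)"
      and v: "\<forall>l<n. cocycle x 1 S k (v l) t"
    using cocycle_decompose[OF hom flat S w] by blast
  show ?thesis
  proof (rule ccontr)
    assume "\<not> frob_nonzero x S q k"
    then have v_cob: "coboundary x 1 S k (\<lambda>I. v l I ^ q) (t * q)" if "l < n" for l
      using v that unfolding frob_nonzero_def by blast
    have "coboundary (\<lambda>i. f (x i)) 1 S k (\<lambda>I. f (v l I ^ q)) (t * q)" if "l < n" for l
      using v_cob[OF that] by (rule coboundary_hom[OF hom])
    then have "coboundary (\<lambda>i. f (x i)) 1 S k (\<lambda>I. y l ^ q * f (v l I ^ q)) (t * q)" if "l \<in> {..<n}" for l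
      using that by (simp add: coboundary_cmult)
    then have "coboundary (\<lambda>i. f (x i)) 1 S k (\<lambda>I. \<Sum>l<n. y l ^ q * f (v l I ^ q)) (t * q)"
      by (rule coboundary_sum[OF S finite_lessThan])
    moreover have "(\<Sum>l<n. y l ^ q * f (v l I ^ q)) = w I ^ q" if "I \<subseteq> S" "card I = k" for I
    proof -
      have "w I ^ q = (\<Sum>l<n. (f (v l I) * y l) ^ q)"
        using w_eq that by (simp add: frob_sum[OF char_b])
      then show ?thesis by (simp add: hom_power[OF hom] power_mult_distrib mult.commute)
    qed
    ultimately have "coboundary (\<lambda>i. f (x i)) 1 S k (\<lambda>I. w I ^ q) (t * q)"
      by (simp add: coboundary_cong[where z="\<lambda>I. \<Sum>l<n. y l ^ q * f (v l I ^ q)" and z'="\<lambda>I. w I ^ q"])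
    with not_cob show False ..
  qed
qed

lemma frob_nonzero_base_change:
  assumes "finite S" "prime CHAR('b)" "q = CHAR('b) ^ s"
  shows "frob_nonzero x S q k \<longleftrightarrow> frob_nonzero (\<lambda>i. f (x i)) S q k"
  using frob_nonzero_imp_base_change frob_nonzero_of_base_change assms by blast

lemma frob_nonzero_on_base_change:
  fixes xs :: "'a list" and ys :: "'b list"
  assumes gens: "ideal_gen (set (map f xs)) = ideal_gen (set ys)"
    and char: "prime CHAR('b)" "CHAR('a) = CHAR('b)"
  shows "frob_nonzero_on xs i s \<longleftrightarrow> frob_nonzero_on ys i s"
proof -
  have "frob_nonzero_on xs i s \<longleftrightarrow> frob_nonzero (nth xs) {..<length xs} (CHAR('b) ^ s) i"
    unfolding frob_nonzero_on_iff char(2) ..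
  also have "\<dots> \<longleftrightarrow> frob_nonzero (\<lambda>j. f (xs ! j)) {..<length xs} (CHAR('b) ^ s) i"
    by (rule frob_nonzero_base_change[OF finite_lessThan char(1) refl])
  also have "\<dots> \<longleftrightarrow> frob_nonzero (nth (map f xs)) (id ` {..<length xs}) (CHAR('b) ^ s) i"
    by (rule frob_nonzero_relabel[symmetric]) (simp_all add: strict_mono_on_def)
  also have "\<dots> \<longleftrightarrow> frob_nonzero (nth ys) {..<length ys} (CHAR('b) ^ s) i"
    using frob_nonzero_generators_indep[OF gens char(1) refl] by simp
  finally show ?thesis unfolding frob_nonzero_on_iff .
qed

end

lemma ideal_gen_some_generators:
  "noetherian_ring TYPE('a::comm_ring_1) \<Longrightarrow> is_ideal (I :: 'a set) \<Longrightarrow>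
    ideal_gen (set (SOME xs. ideal_gen (set xs) = I)) = I"
  unfolding noetherian_ring_def by (metis (mono_tags, lifting) someI_ex)

lemma F_depth_L_cong:
  assumes "\<And>i s. frob_nonzero_on (SOME xs. ideal_gen (set xs) = mt) i s \<longleftrightarrow>
      frob_nonzero_on (SOME ys. ideal_gen (set ys) = m) i s"
  shows "F_depth_L mt = F_depth_L m"
proof -
  have "fdepth_prop (SOME xs. ideal_gen (set xs) = mt) = fdepth_prop (SOME ys. ideal_gen (set ys) = m)"
    unfolding fdepth_prop_def using assms by blast
  then show ?thesis unfolding F_depth_L_def Let_def by simp
qed

lemma local_ring_max_ideal: "local_ring_max m \<Longrightarrow> is_ideal m" "local_ring_max m \<Longrightarrow> 1 \<notin> m"
  unfolding local_ring_max_def maximal_ideal_def by blast+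

theorem lemma3p2:
  fixes \<phi> :: "'a::comm_ring_1 \<Rightarrow> 'b::comm_ring_1"
    and mt :: "'a set" and m :: "'b set" and p :: nat
  assumes "noetherian_ring TYPE('a)" and "noetherian_ring TYPE('b)"
    and "local_ring_max mt" and "local_ring_max m"
    and "prime p" and "CHAR('a) = p" and "CHAR('b) = p"
    and "ring_homomorphism \<phi>" and "flat_hom \<phi>"
    and "ideal_gen (\<phi> ` mt) = m"
  shows "F_depth_L mt = F_depth_L m"
proof (rule F_depth_L_cong)
  have "\<phi> ` mt \<subseteq> ideal_gen (\<phi> ` mt)" by (auto intro: in_ideal_gen)
  then interpret flat_local_hom \<phi> mt m
    using assms(3,4,8-10) local_ring_max_ideal[OF assms(4)] by unfold_locales auto
  define xs where "xs = (SOME xs. ideal_gen (set xs) = mt)"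
  define ys where "ys = (SOME ys. ideal_gen (set ys) = m)"
  have "ideal_gen (set xs) = mt"
    unfolding xs_def by (rule ideal_gen_some_generators[OF assms(1) local_ring_max_ideal(1)[OF assms(3)]])
  moreover have "ideal_gen (set ys) = m"
    unfolding ys_def by (rule ideal_gen_some_generators[OF assms(2) local_ring_max_ideal(1)[OF assms(4)]])
  ultimately have "ideal_gen (set (map \<phi> xs)) = ideal_gen (set ys)"
    using ideal_gen_image_hom[OF hom, of "set xs"] assms(10) by simp
  then show "frob_nonzero_on xs i s \<longleftrightarrow> frob_nonzero_on ys i s" for i s
    using assms(5-7) by (intro frob_nonzero_on_base_change) simp_all
qed

end
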